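(* Let $X$ be the AR($p$)-process with coefficients $(a_1,\dots,a_p)$ such that all (complex) roots of the characteristic polynomial $f_p(z)=z^p-\sum_{k=1}^pa_kz^{p-k}$ have modulus strictly less than $1$. Assume $\mathbb{E}[Y_1]=0$ and $|Y_1|\le M<\infty$ a.s. Then there is $x_0\ge0$ such that for all $x\ge x_0$, $$\mathbb{P}\Big(\sup_{n=1,\dots,N}\sum_{k=1}^nX_k\le x\Big)\asymp N^{-1/2},\quad N\to\infty.$$
   Context: Let $(Y_n)_{n\ge1}$ be i.i.d. nondegenerate real random variables. The AR($p$)-process is $X_n=\sum_{k=1}^pa_kX_{n-k}+Y_n$ for $n\ge1$ with $X_n=0$ for $n\le0$. $f\asymp g$ means $0<\liminf f/g\le\limsup f/g<\infty$. *)

theory Defs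
  imports "HOL-Probability.Probability" "HOL-Library.Landau_Symbols"
begin

text \<open>AR(p) process driven by the innovations Y (indices n \<ge> 1), with coefficients a 1, ..., a p,
  and X n = 0 for n \<le> 0 (only X 0 is represented; terms X (n-k) with k \<ge> n vanish).\<close>
definition is_AR_process ::
  "nat \<Rightarrow> (nat \<Rightarrow> real) \<Rightarrow> (nat \<Rightarrow> 'a \<Rightarrow> real) \<Rightarrow> (nat \<Rightarrow> 'a \<Rightarrow> real) \<Rightarrow> bool" where
  "is_AR_process p a Y X \<longleftrightarrow>
     (\<forall>\<omega>. X 0 \<omega> = 0) \<and>
     (\<forall>n\<ge>1. \<forall>\<omega>. X n \<omega> = (\<Sum>k=1..p. a k * (if k < n then X (n - k) \<omega> else 0)) + Y n \<omega>)"

definition char_poly_AR :: "nat \<Rightarrow> (nat \<Rightarrow> real) \<Rightarrow> complex \<Rightarrow> complex" where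
  "char_poly_AR p a z = z ^ p - (\<Sum>k=1..p. complex_of_real (a k) * z ^ (p - k))"

end

theory Submission
  imports Defs "HOL-Computational_Algebra.Polynomial_FPS"
    "HOL-Computational_Algebra.Fundamental_Theorem_Algebra"
begin

(* The argument reduces the AR process to the random walk W n = Y 1 + ... + Y n of its innovations.
   (1) Deterministic part: if all roots of f_p lie in the open unit disc, the reflected characteristic
       polynomial G(z) = 1 - a_1 z - ... - a_p z^p has a power-series inverse with absolutely summable
       coefficients.  Writing G(z) = G(1) + (z - 1) H(z), generating functions show that
       c * (X 1 + ... + X n) - W n, with c = G(1) = 1 - (a_1 + ... + a_p) > 0, is a convolution of the
       innovations with a summable kernel; hence it is bounded by a constant E when |Y k| <= Mb.
   (2) Probabilistic part: for the walk of i.i.d. bounded, centred, nondegenerate steps the probability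
       of staying below level y up to time N is of order N^(-1/2).  Both bounds come from second-moment
       identities for martingale transforms (sums of predictable weights times innovations): the upper
       bound from the walk stopped on leaving the strip (-L, y], the lower bound additionally from a
       one-sided Kolmogorov maximal inequality, each with L proportional to sqrt N.
   (3) The event {max of AR partial sums <= x} is sandwiched between the events that the walk stays
       below c x - E and below c x + E, which yields the theorem for x >= (E + 1) / c.
   The sections follow this order: power series and the characteristic polynomial, the deterministic
   comparison, martingale transforms of the innovations (with Kolmogorov's inequality), elementary
   estimates, persistence of the walk, and the transfer to the AR process. *)

unbundle no vec_syntax
unbundle fps_syntax

section \<open>Power series with absolutely bounded coefficient sums\<close>

definition fps_abs_bounded :: "complex fps \<Rightarrow> bool" where
  "fps_abs_bounded f \<longleftrightarrow> (\<exists>A. \<forall>n. (\<Sum>i\<le>n. cmod (f $ i)) \<le> A)"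

lemma fps_abs_bounded_mult:
  assumes "fps_abs_bounded f" "fps_abs_bounded g" shows "fps_abs_bounded (f * g)"
proof -
  obtain A where A: "\<And>n. (\<Sum>i\<le>n. cmod (f $ i)) \<le> A"
    using assms(1) unfolding fps_abs_bounded_def by blast
  obtain B where B: "\<And>n. (\<Sum>i\<le>n. cmod (g $ i)) \<le> B"
    using assms(2) unfolding fps_abs_bounded_def by blast
  have A0: "A \<ge> 0" using A[of 0] by (meson norm_ge_zero order_trans sum_nonneg)
  have "(\<Sum>n\<le>N. cmod ((f*g) $ n)) \<le> A * B" for N
  proof -
    have "(\<Sum>n\<le>N. cmod ((f*g) $ n)) \<le> (\<Sum>n\<le>N. \<Sum>i\<le>n. cmod (f$i) * cmod (g$(n-i)))"
      unfolding fps_mult_nth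
      by (intro sum_mono) (auto simp: atLeast0AtMost norm_mult intro: order_trans[OF norm_sum])
    also have "\<dots> = (\<Sum>(i,j)\<in>{(i,j). i+j \<le> N}. cmod (f$i) * cmod (g$j))"
      by (rule sum.triangle_reindex_eq[symmetric])
    also have "\<dots> \<le> (\<Sum>(i,j)\<in>{..N}\<times>{..N}. cmod (f$i) * cmod (g$j))"
      by (intro sum_mono2) auto
    also have "\<dots> = (\<Sum>i\<le>N. cmod (f$i)) * (\<Sum>j\<le>N. cmod (g$j))"
      by (simp add: sum_product sum.cartesian_product)
    also have "\<dots> \<le> A * B"
      by (intro mult_mono A B A0) (auto intro: sum_nonneg)
    finally show ?thesis .
  qed
  then show ?thesis unfolding fps_abs_bounded_def by blast
qed

lemma fps_abs_bounded_one: "fps_abs_bounded 1"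
proof -
  have "(\<Sum>i\<le>n. cmod ((1::complex fps) $ i)) = (\<Sum>i\<le>n. if i = 0 then 1 else 0)" for n
    by (intro sum.cong) (auto simp: fps_one_nth)
  then show ?thesis unfolding fps_abs_bounded_def by (intro exI[of _ 1]) simp
qed

lemma fps_abs_bounded_geometric:
  assumes "cmod r < 1" shows "fps_abs_bounded (Abs_fps (\<lambda>n. r ^ n))"
proof -
  have "(\<Sum>i\<le>n. cmod (r ^ i)) \<le> 1 / (1 - cmod r)" for n
  proof -
    have "(1 - cmod r) * (\<Sum>i\<le>n. cmod r ^ i) = 1 - cmod r ^ Suc n" by (rule sum_gp_basic)
    also have "\<dots> \<le> 1" by simp
    finally show ?thesis using assms by (simp add: norm_power field_simps mult.commute)
  qed
  then show ?thesis unfolding fps_abs_bounded_def by auto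
qed

lemma fps_abs_bounded_poly: "fps_abs_bounded (fps_of_poly q)"
proof -
  have "(\<Sum>i\<le>n. cmod (coeff q i)) \<le> (\<Sum>i\<le>degree q. cmod (coeff q i))" for n
  proof (cases "n \<le> degree q")
    case True then show ?thesis by (intro sum_mono2) auto
  next
    case False
    then have "(\<Sum>i\<le>n. cmod (coeff q i)) = (\<Sum>i\<le>degree q. cmod (coeff q i))"
      by (intro sum.mono_neutral_right) (auto simp: coeff_eq_0)
    then show ?thesis by simp
  qed
  then show ?thesis unfolding fps_abs_bounded_def by auto
qed

lemma convolution_bound:
  fixes K :: "complex fps" and u :: "nat \<Rightarrow> real"
  assumes K: "\<And>n. (\<Sum>i\<le>n. cmod (K $ i)) \<le> A" and u: "\<And>n. \<bar>u n\<bar> \<le> B" and B: "B \<ge> 0"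
  shows "cmod ((K * Abs_fps (\<lambda>n. of_real (u n))) $ m) \<le> A * B"
proof -
  have "cmod ((K * Abs_fps (\<lambda>n. of_real (u n))) $ m) \<le> (\<Sum>i=0..m. cmod (K $ i) * B)"
    unfolding fps_mult_nth
    by (rule order_trans[OF norm_sum]) (auto intro!: sum_mono mult_left_mono simp: norm_mult u)
  also have "\<dots> = (\<Sum>i\<le>m. cmod (K $ i)) * B" by (simp add: sum_distrib_right atLeast0AtMost)
  also have "\<dots> \<le> A * B" using K[of m] B by (simp add: mult_right_mono)
  finally show ?thesis .
qed

lemma fps_geometric_inverse: "fps_of_poly [:1, -r:] * Abs_fps (\<lambda>n. r ^ n) = (1 :: complex fps)"
proof -
  have "fps_of_poly [:1, -r:] = 1 - fps_const r * fps_X"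
    by (rule fps_ext) (auto simp: coeff_pCons fps_mult_left_const_nth split: nat.split)
  moreover have "(1 - fps_const r * fps_X) * Abs_fps (\<lambda>n. r ^ n) = (1 :: complex fps)"
  proof (rule fps_ext)
    fix n
    show "((1 - fps_const r * fps_X) * Abs_fps (\<lambda>n. r ^ n)) $ n = (1::complex fps) $ n"
      by (cases n) (simp_all add: algebra_simps mult.assoc)
  qed
  ultimately show ?thesis by (simp only:)
qed

text \<open>Purely algebraic core of the comparison between AR sums and innovation sums.\<close>
lemma fps_partial_sums_identity:
  fixes G H \<psi> x u s w :: "'b::idom fps"
  assumes inv: "G * \<psi> = 1" and G_split: "G = fps_const C + (fps_X - 1) * H"
    and rec: "G * x = u" and sx: "(1 - fps_X) * s = x" and wu: "(1 - fps_X) * w = u"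
  shows "fps_const C * s - w = (H * \<psi>) * u"
proof -
  have nz: "(1 - fps_X :: 'b fps) \<noteq> 0"
  proof
    assume "(1 - fps_X :: 'b fps) = 0"
    then have "(1 - fps_X :: 'b fps) $ 0 = 0" by simp
    then show False by simp
  qed
  have "(1 - fps_X) * w = G * ((1 - fps_X) * s)" by (simp only: wu rec sx)
  also have "\<dots> = (1 - fps_X) * (G * s)" by (rule mult.left_commute)
  finally have wG: "w = G * s" using nz by (rule mult_left_cancel[THEN iffD1, rotated])
  have xu: "x = \<psi> * u"
    by (metis inv rec mult.assoc mult.commute mult_1)
  have "fps_const C * s - w = H * ((1 - fps_X) * s)"
    by (simp add: wG G_split algebra_simps)
  also have "\<dots> = (H * \<psi>) * u" by (simp only: sx xu mult.assoc)
  finally show ?thesis .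
qed

section \<open>The characteristic polynomial\<close>

text \<open>\<open>f\<^sub>p\<close> as a polynomial object, so that it can be factored and reflected.\<close>
definition char_poly :: "nat \<Rightarrow> (nat \<Rightarrow> real) \<Rightarrow> complex poly" where
  "char_poly p a = monom 1 p - (\<Sum>k=1..p. monom (complex_of_real (a k)) (p - k))"

lemma poly_char_poly: "poly (char_poly p a) z = char_poly_AR p a z"
  by (simp add: char_poly_def char_poly_AR_def poly_monom poly_sum)

lemma coeff_char_poly:
  "coeff (char_poly p a) i = (if i = p then 1 else if i < p then - of_real (a (p - i)) else 0)"
proof -
  have "(\<Sum>k=1..p. coeff (monom (complex_of_real (a k)) (p - k)) i)
        = (\<Sum>k=1..p. if i < p then (if k = p - i then complex_of_real (a k) else 0) else 0)"
    by (intro sum.cong) (auto simp: coeff_monom)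
  also have "\<dots> = (if i < p then of_real (a (p - i)) else 0)"
    by (cases "i < p") (simp_all add: sum.delta')
  finally show ?thesis by (simp add: char_poly_def coeff_diff coeff_sum coeff_monom)
qed

lemma degree_char_poly: "degree (char_poly p a) = p"
proof (rule antisym)
  show "degree (char_poly p a) \<le> p" by (rule degree_le) (auto simp: coeff_char_poly)
  show "p \<le> degree (char_poly p a)" by (rule le_degree) (simp add: coeff_char_poly)
qed

text \<open>The reflected polynomial is \<open>G(z) = 1 - a\<^sub>1 z - \<dots> - a\<^sub>p z\<^sup>p\<close>, the symbol of the AR recursion.\<close>
lemma coeff_reflect_char_poly:
  "coeff (reflect_poly (char_poly p a)) i = of_real (if i = 0 then 1 else if i \<le> p then - a i else 0)"
  by (auto simp: coeff_reflect_poly degree_char_poly coeff_char_poly)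

lemma reflect_poly_linear: "reflect_poly [:-r, 1:] = [:1, -r::complex:]"
  by (intro poly_eqI) (auto simp: coeff_reflect_poly coeff_pCons split: nat.split)

text \<open>Stability: if all roots of \<open>f\<^sub>p\<close> lie in the open unit disc, then \<open>G = \<Prod> (1 - r\<^sub>i z)\<close> has the
  absolutely summable inverse \<open>\<Prod> \<Sum>\<^sub>n r\<^sub>i\<^sup>n z\<^sup>n\<close>.\<close>
lemma reflect_char_poly_invertible:
  assumes roots: "\<And>z. char_poly_AR p a z = 0 \<Longrightarrow> cmod z < 1"
  shows "\<exists>\<psi>. fps_abs_bounded \<psi> \<and> fps_of_poly (reflect_poly (char_poly p a)) * \<psi> = 1"
proof -
  obtain root where R: "smult (lead_coeff (char_poly p a))
      (\<Prod>i<degree (char_poly p a). [:-root i, 1:]) = char_poly p a"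
    by (rule complex_poly_decompose')
  hence R': "char_poly p a = (\<Prod>i<p. [:-root i,1:])"
    by (simp add: degree_char_poly coeff_char_poly)
  have root_small: "cmod (root i) < 1" if "i < p" for i
  proof -
    have "poly (char_poly p a) (root i) = 0" using that by (auto simp: R' poly_prod)
    then show ?thesis using roots by (simp add: poly_char_poly)
  qed
  have G: "reflect_poly (char_poly p a) = (\<Prod>i<p. [:1, -root i:])"
    by (simp add: R' reflect_poly_prod reflect_poly_linear)
  define \<psi> where "\<psi> = (\<Prod>i<p. Abs_fps (\<lambda>n. root i ^ n))"
  have "fps_of_poly (reflect_poly (char_poly p a)) * \<psi>
      = (\<Prod>i<p. fps_of_poly [:1,-root i:] * Abs_fps (\<lambda>n. root i ^ n))"
    by (simp add: G fps_of_poly_prod \<psi>_def prod.distrib)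
  also have "\<dots> = 1" by (simp add: fps_geometric_inverse)
  finally have inverse: "fps_of_poly (reflect_poly (char_poly p a)) * \<psi> = 1" .
  have "m \<le> p \<longrightarrow> fps_abs_bounded (\<Prod>i<m. Abs_fps (\<lambda>n. root i ^ n))" for m
    by (induction m)
       (auto simp: fps_abs_bounded_one intro!: fps_abs_bounded_mult fps_abs_bounded_geometric root_small)
  then have "fps_abs_bounded \<psi>" unfolding \<psi>_def by simp
  with inverse show ?thesis by blast
qed

text \<open>The real characteristic polynomial is positive at \<open>1 + \<Sum> |a\<^sub>k|\<close>, since there the leading term
  dominates.\<close>
lemma real_char_poly_large_pos:
  fixes a :: "nat \<Rightarrow> real" and p :: nat
  defines "T \<equiv> 1 + (\<Sum>k=1..p. \<bar>a k\<bar>)"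
  shows "T^p - (\<Sum>k=1..p. a k * T^(p-k)) > 0"
proof (cases "p = 0")
  case False
  have T1: "T \<ge> 1" unfolding T_def by (simp add: sum_nonneg)
  have "(\<Sum>k=1..p. a k * T^(p-k)) \<le> (\<Sum>k=1..p. \<bar>a k\<bar> * T^(p-1))"
  proof (intro sum_mono)
    fix k assume k: "k \<in> {1..p}"
    have "a k * T^(p-k) \<le> \<bar>a k\<bar> * T^(p-k)" using T1 by (intro mult_right_mono) auto
    also have "\<dots> \<le> \<bar>a k\<bar> * T^(p-1)" using T1 k by (intro mult_left_mono power_increasing) auto
    finally show "a k * T^(p-k) \<le> \<bar>a k\<bar> * T^(p-1)" .
  qed
  also have "\<dots> = (T - 1) * T^(p-1)" by (simp add: T_def sum_distrib_right)
  also have "\<dots> < T * T^(p-1)" using T1 by (simp add: algebra_simps)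
  also have "\<dots> = T^p" using False by (simp add: power_eq_if)
  finally show ?thesis by simp
qed simp

text \<open>Stability forces \<open>f\<^sub>p(1) = 1 - (a\<^sub>1 + \<dots> + a\<^sub>p) > 0\<close>: \<open>f\<^sub>p\<close> is positive for large real arguments and
  has no real root in \<open>[1, \<infinity>)\<close>, so by the intermediate value theorem it is positive at 1.\<close>
lemma char_poly_one_pos:
  assumes roots: "\<And>z. char_poly_AR p a z = 0 \<Longrightarrow> cmod z < 1"
  shows "1 - (\<Sum>k=1..p. a k) > 0"
proof -
  define \<phi> where "\<phi> t = t^p - (\<Sum>k=1..p. a k * t^(p-k))" for t :: real
  have \<phi>_complex: "char_poly_AR p a (of_real t) = of_real (\<phi> t)" for t
    by (simp add: char_poly_AR_def \<phi>_def)
  have nonzero: "\<phi> t \<noteq> 0" if "t \<ge> 1" for t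
  proof
    assume "\<phi> t = 0"
    then have "cmod (of_real t) < 1" using roots[of "of_real t"] by (simp add: \<phi>_complex)
    with that show False by simp
  qed
  define T where "T = 1 + (\<Sum>k=1..p. \<bar>a k\<bar>)"
  have T1: "T \<ge> 1" unfolding T_def by (simp add: sum_nonneg)
  have posT: "\<phi> T > 0" unfolding \<phi>_def T_def by (rule real_char_poly_large_pos)
  have "\<phi> 1 > 0"
  proof (rule ccontr)
    assume "\<not> \<phi> 1 > 0"
    moreover have "\<forall>t. 1 \<le> t \<and> t \<le> T \<longrightarrow> isCont \<phi> t"
      unfolding \<phi>_def by (intro allI impI continuous_intros)
    ultimately obtain t where "1 \<le> t" "t \<le> T" "\<phi> t = 0" using IVT[of \<phi> 1 0 T] posT T1 by auto
    with nonzero show False by auto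
  qed
  then show ?thesis by (simp add: \<phi>_def)
qed

section \<open>AR partial sums versus innovation partial sums\<close>

text \<open>The AR recursion, read as the convolution identity \<open>G \<cdot> x = u\<close> of the shifted sequences.\<close>
lemma AR_convolution_identity:
  fixes x u :: "nat \<Rightarrow> real"
  assumes rec: "\<forall>n\<ge>1. x n = (\<Sum>k=1..p. a k * (if k < n then x (n-k) else 0)) + u n"
  shows "(\<Sum>i=0..n. (if i = 0 then 1 else if i \<le> p then - a i else 0) * x (Suc (n - i))) = u (Suc n)"
proof -
  define g where "g i = (if i = 0 then 1 else if i \<le> p then - a i else 0)" for i
  have "(\<Sum>i=0..n. g i * x (Suc (n - i))) = x (Suc n) + (\<Sum>i=Suc 0..n. g i * x (Suc (n - i)))"
    by (subst sum.atLeast_Suc_atMost) (auto simp: g_def)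
  also have "(\<Sum>i=Suc 0..n. g i * x (Suc (n - i))) = - (\<Sum>i\<in>{i\<in>{1..n}. i \<le> p}. a i * x (Suc (n - i)))"
    by (subst sum.inter_filter) (auto simp: g_def sum_negf[symmetric] intro!: sum.cong)
  also have "{i\<in>{1..n}. i \<le> p} = {k\<in>{1..p}. k < Suc n}" by auto
  also have "(\<Sum>i\<in>{k\<in>{1..p}. k < Suc n}. a i * x (Suc (n - i)))
      = (\<Sum>k=1..p. a k * (if k < Suc n then x (Suc n - k) else 0))"
  proof -
    have "(\<Sum>k=1..p. a k * (if k < Suc n then x (Suc n - k) else 0))
        = (\<Sum>k=1..p. if k < Suc n then a k * x (Suc (n - k)) else 0)"
      by (intro sum.cong) (auto simp: Suc_diff_le)
    also have "\<dots> = (\<Sum>i\<in>{k\<in>{1..p}. k < Suc n}. a i * x (Suc (n - i)))"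
      by (rule sum.inter_filter[symmetric]) simp
    finally show ?thesis by simp
  qed
  finally show ?thesis using rec[rule_format, of "Suc n"] by (simp add: g_def)
qed

text \<open>\<open>G(1) = f\<^sub>p(1) = 1 - \<Sum> a\<^sub>k\<close>, so \<open>G - G(1)\<close> is divisible by \<open>z - 1\<close>.\<close>
lemma reflect_char_poly_split_at_one:
  obtains H where "fps_of_poly (reflect_poly (char_poly p a))
    = fps_const (of_real (1 - (\<Sum>k=1..p. a k))) + (fps_X - 1) * fps_of_poly H"
proof -
  define G where "G = reflect_poly (char_poly p a)"
  define c where "c = complex_of_real (1 - (\<Sum>k=1..p. a k))"
  have "poly G 1 = c"
    using poly_reflect_poly_nz[of 1 "char_poly p a"]
    by (simp add: G_def c_def poly_char_poly char_poly_AR_def)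
  then have "poly (G - [:c:]) 1 = 0" by simp
  then obtain H where H: "G - [:c:] = [:-1,1:] * H"
    by (metis poly_eq_0_iff_dvd dvdE)
  have "fps_of_poly [:-1,1:] = fps_X - (1::complex fps)"
    by (rule fps_ext) (auto simp: coeff_pCons split: nat.split)
  moreover have "G = [:c:] + [:-1,1:] * H" using H by (simp add: algebra_simps)
  ultimately show ?thesis using that[of H]
    by (simp add: G_def c_def fps_of_poly_add fps_of_poly_mult fps_of_poly_const)
qed

lemma fps_partial_sums_difference:
  fixes v :: "nat \<Rightarrow> real"
  shows "(1 - fps_X) * Abs_fps (\<lambda>n. complex_of_real (\<Sum>k=1..Suc n. v k))
    = Abs_fps (\<lambda>n. complex_of_real (v (Suc n)))"
proof (rule fps_ext)
  fix n
  show "((1 - fps_X) * Abs_fps (\<lambda>n. complex_of_real (\<Sum>k=1..Suc n. v k))) $ n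
      = Abs_fps (\<lambda>n. complex_of_real (v (Suc n))) $ n"
    by (cases n) (simp_all add: algebra_simps)
qed

lemma AR_sums_defect_convolution:
  fixes x u :: "nat \<Rightarrow> real"
  assumes inv: "fps_of_poly (reflect_poly (char_poly p a)) * \<psi> = 1"
    and G_split: "fps_of_poly (reflect_poly (char_poly p a))
      = fps_const (of_real (1 - (\<Sum>k=1..p. a k))) + (fps_X - 1) * fps_of_poly H"
    and rec: "\<forall>n\<ge>1. x n = (\<Sum>k=1..p. a k * (if k < n then x (n-k) else 0)) + u n"
  shows "complex_of_real ((1 - (\<Sum>k=1..p. a k)) * (\<Sum>k=1..Suc m. x k) - (\<Sum>k=1..Suc m. u k))
    = ((fps_of_poly H * \<psi>) * Abs_fps (\<lambda>n. of_real (u (Suc n)))) $ m"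
proof -
  define xf where "xf = Abs_fps (\<lambda>n. complex_of_real (x (Suc n)))"
  define uf where "uf = Abs_fps (\<lambda>n. complex_of_real (u (Suc n)))"
  define sf where "sf = Abs_fps (\<lambda>n. complex_of_real (\<Sum>k=1..Suc n. x k))"
  define wf where "wf = Abs_fps (\<lambda>n. complex_of_real (\<Sum>k=1..Suc n. u k))"
  have "fps_of_poly (reflect_poly (char_poly p a)) * xf = uf"
  proof (rule fps_ext)
    fix m
    have "(fps_of_poly (reflect_poly (char_poly p a)) * xf) $ m = of_real (\<Sum>i=0..m.
        (if i = 0 then 1 else if i \<le> p then - a i else 0) * x (Suc (m - i)))"
      by (simp add: fps_mult_nth xf_def coeff_reflect_char_poly)
    then show "(fps_of_poly (reflect_poly (char_poly p a)) * xf) $ m = uf $ m"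
      using AR_convolution_identity[OF rec] by (simp add: uf_def)
  qed
  moreover have "(1 - fps_X) * sf = xf" "(1 - fps_X) * wf = uf"
    unfolding sf_def xf_def wf_def uf_def by (rule fps_partial_sums_difference)+
  ultimately have "fps_const (of_real (1 - (\<Sum>k=1..p. a k))) * sf - wf = (fps_of_poly H * \<psi>) * uf"
    by (intro fps_partial_sums_identity[OF inv G_split])
  then show ?thesis
    by (metis uf_def sf_def wf_def fps_sub_nth fps_mult_left_const_nth fps_nth_Abs_fps
        of_real_mult of_real_diff)
qed

lemma AR_partial_sums_comparison:
  assumes roots: "\<And>z. char_poly_AR p a z = 0 \<Longrightarrow> cmod z < 1"
  obtains D where "D \<ge> 0" and "\<And>(x::nat\<Rightarrow>real) u B n.
     \<forall>n\<ge>1. x n = (\<Sum>k=1..p. a k * (if k < n then x (n-k) else 0)) + u n \<Longrightarrow>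
     \<forall>n\<ge>1. \<bar>u n\<bar> \<le> B \<Longrightarrow>
     \<bar>(1 - (\<Sum>k=1..p. a k)) * (\<Sum>k=1..n. x k) - (\<Sum>k=1..n. u k)\<bar> \<le> D * B"
proof -
  obtain \<psi> where \<psi>: "fps_abs_bounded \<psi>" "fps_of_poly (reflect_poly (char_poly p a)) * \<psi> = 1"
    using reflect_char_poly_invertible[OF roots] by blast
  obtain H where G_split: "fps_of_poly (reflect_poly (char_poly p a))
      = fps_const (of_real (1 - (\<Sum>k=1..p. a k))) + (fps_X - 1) * fps_of_poly H"
    by (rule reflect_char_poly_split_at_one)
  obtain A where A: "\<And>n. (\<Sum>i\<le>n. cmod ((fps_of_poly H * \<psi>) $ i)) \<le> A"
    using fps_abs_bounded_mult[OF fps_abs_bounded_poly \<psi>(1)] unfolding fps_abs_bounded_def by blast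
  have A0: "A \<ge> 0" using A[of 0] by (meson norm_ge_zero order_trans sum_nonneg)
  show ?thesis
  proof (rule that[OF A0])
    fix x u :: "nat \<Rightarrow> real" and B n
    assume rec: "\<forall>n\<ge>1. x n = (\<Sum>k=1..p. a k * (if k < n then x (n-k) else 0)) + u n"
      and ub: "\<forall>n\<ge>1. \<bar>u n\<bar> \<le> B"
    have B0: "B \<ge> 0" using ub[rule_format, of 1] by simp
    show "\<bar>(1 - (\<Sum>k=1..p. a k)) * (\<Sum>k=1..n. x k) - (\<Sum>k=1..n. u k)\<bar> \<le> A * B"
    proof (cases n)
      case 0 then show ?thesis using A0 B0 by simp
    next
      case (Suc m)
      have "cmod (((fps_of_poly H * \<psi>) * Abs_fps (\<lambda>n. of_real (u (Suc n)))) $ m) \<le> A * B"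
        by (rule convolution_bound[OF A _ B0]) (simp add: ub)
      then show ?thesis
        unfolding Suc AR_sums_defect_convolution[OF \<psi>(2) G_split rec, symmetric] norm_of_real .
    qed
  qed
qed


section \<open>Martingale transforms of i.i.d. bounded innovations\<close>

locale iid_bounded_innovations = prob_space M for M :: "'a measure" +
  fixes Y :: "nat \<Rightarrow> 'a \<Rightarrow> real" and Mb :: real
  assumes measY[measurable]: "\<And>n. Y n \<in> borel_measurable M"
    and indepY: "indep_vars (\<lambda>_. borel) Y {1..}"
    and identY: "\<And>n. n \<ge> 1 \<Longrightarrow> distr M borel (Y n) = distr M borel (Y 1)"
    and nondeg: "\<not> (\<exists>c. AE \<omega> in M. Y 1 \<omega> = c)"
    and mean0: "expectation (Y 1) = 0"
    and bddY: "AE \<omega> in M. \<bar>Y 1 \<omega>\<bar> \<le> Mb"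
begin

definition sigma2 :: real where "sigma2 = expectation (\<lambda>\<omega>. (Y 1 \<omega>)\<^sup>2)"

lemma Y_bounded_AE: "AE \<omega> in M. \<forall>k. k \<ge> 1 \<longrightarrow> \<bar>Y k \<omega>\<bar> \<le> Mb"
proof -
  have "AE \<omega> in M. k \<ge> 1 \<longrightarrow> \<bar>Y k \<omega>\<bar> \<le> Mb" for k
  proof (cases "k \<ge> 1")
    case True
    have "AE x in distr M borel (Y 1). \<bar>x\<bar> \<le> Mb" using bddY by (subst AE_distr_iff) auto
    then have "AE x in distr M borel (Y k). \<bar>x\<bar> \<le> Mb" by (simp only: identY[OF True])
    then have "AE \<omega> in M. \<bar>Y k \<omega>\<bar> \<le> Mb" by (subst (asm) AE_distr_iff) auto
    then show ?thesis by auto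
  qed simp
  then show ?thesis by (simp add: AE_all_countable)
qed

lemma Y_bounded: "k \<ge> 1 \<Longrightarrow> AE \<omega> in M. \<bar>Y k \<omega>\<bar> \<le> Mb"
  using Y_bounded_AE by eventually_elim auto

lemma Mb_nonneg: "Mb \<ge> 0"
proof (rule ccontr)
  assume neg: "\<not> Mb \<ge> 0"
  have "AE \<omega> in M. False" using bddY by eventually_elim (use neg in auto)
  then show False by (simp add: AE_False)
qed

lemma integrable_AE_bounded:
  fixes f :: "'a \<Rightarrow> real"
  assumes "f \<in> borel_measurable M" "AE \<omega> in M. \<bar>f \<omega>\<bar> \<le> B"
  shows "integrable M f"
  using assms by (intro integrable_const_bound[of _ B]) auto

lemma Y_integral_eq:
  fixes f :: "real \<Rightarrow> real"
  assumes "k \<ge> 1" "f \<in> borel_measurable borel"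
  shows "expectation (\<lambda>\<omega>. f (Y k \<omega>)) = expectation (\<lambda>\<omega>. f (Y 1 \<omega>))"
proof -
  have "expectation (\<lambda>\<omega>. f (Y k \<omega>)) = integral\<^sup>L (distr M borel (Y k)) f"
    by (subst integral_distr) (use assms in auto)
  also have "\<dots> = integral\<^sup>L (distr M borel (Y 1)) f" using identY[OF assms(1)] by simp
  also have "\<dots> = expectation (\<lambda>\<omega>. f (Y 1 \<omega>))"
    by (subst integral_distr) (use assms in auto)
  finally show ?thesis .
qed

lemma Y_mean: "k \<ge> 1 \<Longrightarrow> expectation (Y k) = 0"
  using Y_integral_eq[of k "\<lambda>x. x"] mean0 by simp

lemma Y_second_moment: "k \<ge> 1 \<Longrightarrow> expectation (\<lambda>\<omega>. (Y k \<omega>)\<^sup>2) = sigma2"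
  using Y_integral_eq[of k "\<lambda>x. x\<^sup>2"] by (simp add: sigma2_def)

lemma Y_integrable: "k \<ge> 1 \<Longrightarrow> integrable M (Y k)"
  by (rule integrable_AE_bounded[OF measY Y_bounded])

lemma Y_sq_integrable: "k \<ge> 1 \<Longrightarrow> integrable M (\<lambda>\<omega>. (Y k \<omega>)\<^sup>2)"
proof -
  assume k: "k \<ge> 1"
  have "AE \<omega> in M. \<bar>(Y k \<omega>)\<^sup>2\<bar> \<le> Mb\<^sup>2"
    using Y_bounded[OF k]
    by eventually_elim (use Mb_nonneg in \<open>metis abs_ge_zero abs_power2 power2_abs power_mono\<close>)
  then show ?thesis by (intro integrable_AE_bounded) auto
qed

lemma sigma2_pos: "sigma2 > 0"
proof -
  have "sigma2 \<ge> 0" unfolding sigma2_def by (intro integral_nonneg_AE) auto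
  moreover have "sigma2 \<noteq> 0"
  proof
    assume "sigma2 = 0"
    then have "AE \<omega> in M. (Y 1 \<omega>)\<^sup>2 = 0"
      using integral_nonneg_eq_0_iff_AE[OF Y_sq_integrable[of 1]] unfolding sigma2_def by auto
    then have "AE \<omega> in M. Y 1 \<omega> = 0" by eventually_elim auto
    with nondeg show False by blast
  qed
  ultimately show ?thesis by simp
qed

definition past :: "nat \<Rightarrow> 'a \<Rightarrow> nat \<Rightarrow> real" where
  "past k \<omega> = (\<lambda>i\<in>{1..<k}. Y i \<omega>)"

text \<open>\<open>G\<close> is a measurable function (into \<open>N\<close>) of \<open>Y 1, \<dots>, Y (k - 1)\<close>; such functions are independent
  of \<open>Y k\<close>.\<close>
definition past_fun :: "nat \<Rightarrow> 'b measure \<Rightarrow> ('a \<Rightarrow> 'b) \<Rightarrow> bool" where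
  "past_fun k N G \<longleftrightarrow> (\<exists>g\<in>measurable (PiM {1..<k} (\<lambda>_. borel)) N. G = (\<lambda>\<omega>. g (past k \<omega>)))"

lemma past_measurable: "past k \<in> measurable M (PiM {1..<k} (\<lambda>_. borel))"
  unfolding past_def by (intro measurable_restrict) auto

lemma past_fun_measurable: "past_fun k N G \<Longrightarrow> G \<in> measurable M N"
  unfolding past_fun_def using past_measurable
  by (auto intro: measurable_comp[OF past_measurable, unfolded comp_def])

lemma past_fun_const: "c \<in> space N \<Longrightarrow> past_fun k N (\<lambda>_. c)"
  unfolding past_fun_def by (intro bexI[of _ "\<lambda>_. c"]) auto

lemma past_fun_Y: "1 \<le> i \<Longrightarrow> i < k \<Longrightarrow> past_fun k borel (Y i)"
  unfolding past_fun_def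
  by (intro bexI[of _ "\<lambda>v. v i"]) (auto simp: past_def intro!: measurable_component_singleton)

lemma past_fun_mono:
  assumes "k \<le> k'" "past_fun k N G" shows "past_fun k' N G"
proof -
  obtain g where g: "g \<in> measurable (PiM {1..<k} (\<lambda>_. borel)) N" "G = (\<lambda>\<omega>. g (past k \<omega>))"
    using assms(2) unfolding past_fun_def by blast
  have r: "(\<lambda>v. restrict v {1..<k})
      \<in> measurable (PiM {1..<k'} (\<lambda>_. borel)) (PiM {1..<k} (\<lambda>_. borel :: real measure))"
    using assms(1) by (intro measurable_restrict_subset) auto
  have "restrict (past k' \<omega>) {1..<k} = past k \<omega>" for \<omega>
    using assms(1) by (auto simp: past_def fun_eq_iff)
  moreover have "(\<lambda>v. g (restrict v {1..<k})) \<in> measurable (PiM {1..<k'} (\<lambda>_. borel)) N"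
    using measurable_comp[OF r g(1)] by (simp add: comp_def)
  ultimately show ?thesis unfolding past_fun_def
    by (intro bexI[of _ "\<lambda>v. g (restrict v {1..<k})"]) (auto simp: g(2))
qed

lemma past_fun_comp2:
  assumes "past_fun k N1 A" "past_fun k N2 B" "(\<lambda>(x,y). f x y) \<in> measurable (N1 \<Otimes>\<^sub>M N2) N"
  shows "past_fun k N (\<lambda>\<omega>. f (A \<omega>) (B \<omega>))"
proof -
  obtain gA where gA: "gA \<in> measurable (PiM {1..<k} (\<lambda>_. borel)) N1" "A = (\<lambda>\<omega>. gA (past k \<omega>))"
    using assms(1) unfolding past_fun_def by blast
  obtain gB where gB: "gB \<in> measurable (PiM {1..<k} (\<lambda>_. borel)) N2" "B = (\<lambda>\<omega>. gB (past k \<omega>))"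
    using assms(2) unfolding past_fun_def by blast
  have "(\<lambda>v. (gA v, gB v)) \<in> measurable (PiM {1..<k} (\<lambda>_. borel)) (N1 \<Otimes>\<^sub>M N2)"
    using gA(1) gB(1) by (rule measurable_Pair)
  from measurable_comp[OF this assms(3)]
  have "(\<lambda>v. f (gA v) (gB v)) \<in> measurable (PiM {1..<k} (\<lambda>_. borel)) N" by (simp add: comp_def)
  then show ?thesis unfolding past_fun_def
    by (intro bexI[of _ "\<lambda>v. f (gA v) (gB v)"]) (auto simp: gA(2) gB(2))
qed

lemma past_fun_comp1:
  assumes "past_fun k N1 A" "f \<in> measurable N1 N"
  shows "past_fun k N (\<lambda>\<omega>. f (A \<omega>))"
proof -
  obtain gA where gA: "gA \<in> measurable (PiM {1..<k} (\<lambda>_. borel)) N1" "A = (\<lambda>\<omega>. gA (past k \<omega>))"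
    using assms(1) unfolding past_fun_def by blast
  have "(\<lambda>v. f (gA v)) \<in> measurable (PiM {1..<k} (\<lambda>_. borel)) N"
    using measurable_comp[OF gA(1) assms(2)] by (simp add: comp_def)
  then show ?thesis unfolding past_fun_def
    by (intro bexI[of _ "\<lambda>v. f (gA v)"]) (auto simp: gA(2))
qed

lemma past_fun_add:
  "past_fun k borel A \<Longrightarrow> past_fun k borel B \<Longrightarrow> past_fun k borel (\<lambda>\<omega>. A \<omega> + B \<omega> :: real)"
  by (erule (1) past_fun_comp2) measurable

lemma past_fun_mult:
  "past_fun k borel A \<Longrightarrow> past_fun k borel B \<Longrightarrow> past_fun k borel (\<lambda>\<omega>. A \<omega> * B \<omega> :: real)"
  by (erule (1) past_fun_comp2) measurable

lemma past_fun_le: "past_fun k borel A \<Longrightarrow> past_fun k borel B \<Longrightarrow>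
    past_fun k (count_space UNIV) (\<lambda>\<omega>. (A \<omega> :: real) \<le> B \<omega>)"
  by (erule (1) past_fun_comp2) measurable

lemma past_fun_less: "past_fun k borel A \<Longrightarrow> past_fun k borel B \<Longrightarrow>
    past_fun k (count_space UNIV) (\<lambda>\<omega>. (A \<omega> :: real) < B \<omega>)"
  by (erule (1) past_fun_comp2) measurable

lemma past_fun_conj: "past_fun k (count_space UNIV) A \<Longrightarrow> past_fun k (count_space UNIV) B \<Longrightarrow>
    past_fun k (count_space UNIV) (\<lambda>\<omega>. A \<omega> \<and> B \<omega>)"
  by (erule (1) past_fun_comp2) measurable

lemma past_fun_not:
  "past_fun k (count_space UNIV) A \<Longrightarrow> past_fun k (count_space UNIV) (\<lambda>\<omega>. \<not> A \<omega>)"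
  by (erule past_fun_comp1) measurable

lemma past_fun_indicator:
  "past_fun k (count_space UNIV) A \<Longrightarrow> past_fun k borel (\<lambda>\<omega>. if A \<omega> then 1 else 0 :: real)"
  by (erule past_fun_comp1) measurable

lemma past_fun_sum:
  assumes "finite S" "\<And>i. i \<in> S \<Longrightarrow> past_fun k borel (F i)"
  shows "past_fun k borel (\<lambda>\<omega>. \<Sum>i\<in>S. F i \<omega> :: real)"
  using assms by (induction S rule: finite_induct) (auto intro!: past_fun_add past_fun_const)

lemma past_fun_ball:
  assumes "finite S" "\<And>i. i \<in> S \<Longrightarrow> past_fun k (count_space UNIV) (P i)"
  shows "past_fun k (count_space UNIV) (\<lambda>\<omega>. \<forall>i\<in>S. P i \<omega>)"
  using assms by (induction S rule: finite_induct) (auto intro!: past_fun_conj past_fun_const)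

text \<open>The key use of independence: an integrable function \<open>G\<close> of the past is independent of \<open>Y k\<close>,
  so \<open>E[G Y\<^sub>k] = 0\<close> and \<open>E[G Y\<^sub>k\<^sup>2] = \<sigma>\<^sup>2 E[G]\<close>.\<close>
lemma past_fun_times_innovation:
  assumes k: "k \<ge> 1" and G: "past_fun k borel G" and iG: "integrable M G"
  shows "expectation (\<lambda>\<omega>. G \<omega> * Y k \<omega>) = 0"
    and "expectation (\<lambda>\<omega>. G \<omega> * (Y k \<omega>)\<^sup>2) = expectation G * sigma2"
    and "integrable M (\<lambda>\<omega>. G \<omega> * Y k \<omega>)"
    and "integrable M (\<lambda>\<omega>. G \<omega> * (Y k \<omega>)\<^sup>2)"
proof -
  obtain g where g: "g \<in> borel_measurable (PiM {1..<k} (\<lambda>_. borel))" "G = (\<lambda>\<omega>. g (past k \<omega>))"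
    using G unfolding past_fun_def by blast
  have ind: "indep_var (PiM {1..<k} (\<lambda>_. borel)) (\<lambda>\<omega>. restrict (\<lambda>i. Y i \<omega>) {1..<k})
      (PiM {k} (\<lambda>_. borel)) (\<lambda>\<omega>. restrict (\<lambda>i. Y i \<omega>) {k})"
    using k by (intro indep_var_restrict[OF indepY]) auto
  have c1: "(\<lambda>v. v k) \<in> borel_measurable (PiM {k} (\<lambda>_. borel :: real measure))"
    by (rule measurable_component_singleton) auto
  have c2: "(\<lambda>v. (v k)\<^sup>2) \<in> borel_measurable (PiM {k} (\<lambda>_. borel :: real measure))"
    using c1 by measurable
  have i1: "indep_var borel G borel (Y k)"
    using indep_var_compose[OF ind g(1) c1] by (simp add: comp_def g(2) past_def)
  have i2: "indep_var borel G borel (\<lambda>\<omega>. (Y k \<omega>)\<^sup>2)"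
    using indep_var_compose[OF ind g(1) c2] by (simp add: comp_def g(2) past_def)
  show "expectation (\<lambda>\<omega>. G \<omega> * Y k \<omega>) = 0"
    using indep_var_lebesgue_integral[OF i1 iG Y_integrable[OF k]] Y_mean[OF k] by simp
  show "expectation (\<lambda>\<omega>. G \<omega> * (Y k \<omega>)\<^sup>2) = expectation G * sigma2"
    using indep_var_lebesgue_integral[OF i2 iG Y_sq_integrable[OF k]] Y_second_moment[OF k] by simp
  show "integrable M (\<lambda>\<omega>. G \<omega> * Y k \<omega>)"
    using indep_var_integrable[OF i1 iG Y_integrable[OF k]] .
  show "integrable M (\<lambda>\<omega>. G \<omega> * (Y k \<omega>)\<^sup>2)"
    using indep_var_integrable[OF i2 iG Y_sq_integrable[OF k]] .
qed

text \<open>Measurable and essentially bounded; the class is closed under sums and products, and all the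
  random variables below belong to it, which settles every integrability side condition.\<close>
definition bounded_rv :: "('a \<Rightarrow> real) \<Rightarrow> bool" where
  "bounded_rv f \<longleftrightarrow> f \<in> borel_measurable M \<and> (\<exists>B. AE \<omega> in M. \<bar>f \<omega>\<bar> \<le> B)"

lemma bounded_rv_integrable: "bounded_rv f \<Longrightarrow> integrable M f"
  unfolding bounded_rv_def using integrable_AE_bounded by blast

lemma bounded_rv_measurable: "bounded_rv f \<Longrightarrow> f \<in> borel_measurable M"
  unfolding bounded_rv_def by blast

lemma bounded_rvI: "f \<in> borel_measurable M \<Longrightarrow> (\<And>\<omega>. \<bar>f \<omega>\<bar> \<le> B) \<Longrightarrow> bounded_rv f"
  unfolding bounded_rv_def by auto

lemma bounded_rv_Y: "k \<ge> 1 \<Longrightarrow> bounded_rv (Y k)"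
  unfolding bounded_rv_def using Y_bounded by auto

lemma bounded_rv_add: "bounded_rv f \<Longrightarrow> bounded_rv g \<Longrightarrow> bounded_rv (\<lambda>\<omega>. f \<omega> + g \<omega>)"
  unfolding bounded_rv_def
proof (elim conjE exE, intro conjI)
  fix B1 B2 assume "AE \<omega> in M. \<bar>f \<omega>\<bar> \<le> B1" "AE \<omega> in M. \<bar>g \<omega>\<bar> \<le> B2"
  then have "AE \<omega> in M. \<bar>f \<omega> + g \<omega>\<bar> \<le> B1 + B2" by eventually_elim auto
  then show "\<exists>B. AE \<omega> in M. \<bar>f \<omega> + g \<omega>\<bar> \<le> B" by blast
qed auto

lemma bounded_rv_mult: "bounded_rv f \<Longrightarrow> bounded_rv g \<Longrightarrow> bounded_rv (\<lambda>\<omega>. f \<omega> * g \<omega>)"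
  unfolding bounded_rv_def
proof (elim conjE exE, intro conjI)
  fix B1 B2 assume "AE \<omega> in M. \<bar>f \<omega>\<bar> \<le> B1" "AE \<omega> in M. \<bar>g \<omega>\<bar> \<le> B2"
  then have "AE \<omega> in M. \<bar>f \<omega> * g \<omega>\<bar> \<le> B1 * B2"
    by eventually_elim (simp add: abs_mult mult_mono')
  then show "\<exists>B. AE \<omega> in M. \<bar>f \<omega> * g \<omega>\<bar> \<le> B" by blast
qed auto

lemma bounded_rv_sum:
  "finite S \<Longrightarrow> (\<And>i. i \<in> S \<Longrightarrow> bounded_rv (F i)) \<Longrightarrow> bounded_rv (\<lambda>\<omega>. \<Sum>i\<in>S. F i \<omega>)"
  by (induction S rule: finite_induct) (auto intro: bounded_rv_add bounded_rvI[of _ 0])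

lemma bounded_rv_indicator:
  "P \<in> measurable M (count_space UNIV) \<Longrightarrow> bounded_rv (\<lambda>\<omega>. if P \<omega> then 1 else 0)"
  by (rule bounded_rvI[of _ 1]) auto

lemma bounded_rv_indicator_le: "bounded_rv f \<Longrightarrow> bounded_rv (\<lambda>\<omega>. if f \<omega> \<le> c then 1 else 0)"
  by (rule bounded_rvI[of _ 1]) (auto dest: bounded_rv_measurable)

lemma second_moment_orthogonal_increment:
  assumes A: "bounded_rv A" and I: "bounded_rv I" and R: "bounded_rv R" and I_nonneg: "\<And>\<omega>. I \<omega> \<ge> 0"
    and orth: "expectation (\<lambda>\<omega>. A \<omega> * I \<omega> * R \<omega>) = 0"
  shows "expectation (\<lambda>\<omega>. (A \<omega>)\<^sup>2 * I \<omega>) \<le> expectation (\<lambda>\<omega>. (A \<omega> + R \<omega>)\<^sup>2 * I \<omega>)"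
proof -
  have "expectation (\<lambda>\<omega>. (A \<omega>)\<^sup>2 * I \<omega>)
      = expectation (\<lambda>\<omega>. (A \<omega>)\<^sup>2 * I \<omega>) + 2 * expectation (\<lambda>\<omega>. A \<omega> * I \<omega> * R \<omega>)"
    by (simp add: orth)
  also have "\<dots> = expectation (\<lambda>\<omega>. (A \<omega>)\<^sup>2 * I \<omega> + 2 * (A \<omega> * I \<omega> * R \<omega>))"
    unfolding power2_eq_square
    by (subst Bochner_Integration.integral_add) (auto intro!: bounded_rv_integrable bounded_rv_mult A I R)
  also have "\<dots> \<le> expectation (\<lambda>\<omega>. (A \<omega> + R \<omega>)\<^sup>2 * I \<omega>)"
  proof (rule integral_mono)
    fix \<omega>
    have "0 \<le> (R \<omega>)\<^sup>2 * I \<omega>" using I_nonneg by simp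
    then show "(A \<omega>)\<^sup>2 * I \<omega> + 2 * (A \<omega> * I \<omega> * R \<omega>) \<le> (A \<omega> + R \<omega>)\<^sup>2 * I \<omega>"
      by (simp add: power2_eq_square algebra_simps)
  next
    show "integrable M (\<lambda>\<omega>. (A \<omega>)\<^sup>2 * I \<omega> + 2 * (A \<omega> * I \<omega> * R \<omega>))"
      unfolding power2_eq_square
      by (intro bounded_rv_integrable bounded_rv_mult bounded_rv_add A I R bounded_rvI[of _ 2]) auto
    show "integrable M (\<lambda>\<omega>. (A \<omega> + R \<omega>)\<^sup>2 * I \<omega>)"
      unfolding power2_eq_square by (intro bounded_rv_integrable bounded_rv_mult bounded_rv_add A I R)
  qed
  finally show ?thesis .
qed

definition predictable :: "(nat \<Rightarrow> 'a \<Rightarrow> real) \<Rightarrow> bool" where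
  "predictable H \<longleftrightarrow> (\<forall>k\<ge>1. past_fun k borel (H k)) \<and> (\<forall>k \<omega>. \<bar>H k \<omega>\<bar> \<le> 1)"

definition transform :: "(nat \<Rightarrow> 'a \<Rightarrow> real) \<Rightarrow> nat \<Rightarrow> 'a \<Rightarrow> real" where
  "transform H n \<omega> = (\<Sum>k=1..n. H k \<omega> * Y k \<omega>)"

lemma transform_Suc: "transform H (Suc n) \<omega> = transform H n \<omega> + H (Suc n) \<omega> * Y (Suc n) \<omega>"
  unfolding transform_def by simp

lemma predictable_bounded_rv: "predictable H \<Longrightarrow> k \<ge> 1 \<Longrightarrow> bounded_rv (H k)"
  unfolding predictable_def by (intro bounded_rvI[of _ 1] past_fun_measurable) auto

lemma transform_past_fun:
  assumes H: "predictable H" and nk: "n < k" shows "past_fun k borel (transform H n)"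
  unfolding transform_def
proof (rule past_fun_sum[where F="\<lambda>i \<omega>. H i \<omega> * Y i \<omega>", OF finite_atLeastAtMost])
  fix i assume i: "i \<in> {1..n}"
  have "past_fun i borel (H i)" using H i unfolding predictable_def by simp
  then have "past_fun k borel (H i)" by (rule past_fun_mono[rotated]) (use i nk in auto)
  moreover have "past_fun k borel (Y i)" using i nk by (intro past_fun_Y) auto
  ultimately show "past_fun k borel (\<lambda>\<omega>. H i \<omega> * Y i \<omega>)" by (rule past_fun_mult)
qed

lemma transform_bounded_rv: assumes H: "predictable H" shows "bounded_rv (transform H n)"
  unfolding transform_def
proof (rule bounded_rv_sum[where F="\<lambda>i \<omega>. H i \<omega> * Y i \<omega>", OF finite_atLeastAtMost])
  fix i assume "i \<in> {1..n}"
  then show "bounded_rv (\<lambda>\<omega>. H i \<omega> * Y i \<omega>)"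
    by (intro bounded_rv_mult predictable_bounded_rv[OF H] bounded_rv_Y) auto
qed

lemma transform_mean: "predictable H \<Longrightarrow> expectation (transform H n) = 0"
proof -
  assume H: "predictable H"
  have "expectation (transform H n) = (\<Sum>k=1..n. expectation (\<lambda>\<omega>. H k \<omega> * Y k \<omega>))"
    unfolding transform_def
    by (subst Bochner_Integration.integral_sum)
       (auto intro!: bounded_rv_integrable bounded_rv_mult predictable_bounded_rv[OF H] bounded_rv_Y)
  also have "\<dots> = 0"
  proof (intro sum.neutral ballI past_fun_times_innovation(1))
    fix k assume k: "k \<in> {1..n}"
    then show "1 \<le> k" by simp
    show "past_fun k borel (H k)" using H k unfolding predictable_def by simp
    show "integrable M (H k)" using k by (intro bounded_rv_integrable predictable_bounded_rv[OF H]) simp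
  qed
  finally show ?thesis .
qed

lemma transform_second_moment:
  "predictable H \<Longrightarrow>
    expectation (\<lambda>\<omega>. (transform H n \<omega>)\<^sup>2) = sigma2 * (\<Sum>k=1..n. expectation (\<lambda>\<omega>. (H k \<omega>)\<^sup>2))"
proof (induction n)
  case 0 then show ?case by (simp add: transform_def)
next
  case (Suc n)
  note H = Suc.prems
  have past_H: "past_fun (Suc n) borel (H (Suc n))" using H unfolding predictable_def by simp
  have bdd_H: "bounded_rv (H (Suc n))" by (rule predictable_bounded_rv[OF H]) simp
  have G1: "past_fun (Suc n) borel (\<lambda>\<omega>. transform H n \<omega> * H (Suc n) \<omega>)"
    by (intro past_fun_mult transform_past_fun[OF H] past_H) simp
  have G2: "past_fun (Suc n) borel (\<lambda>\<omega>. (H (Suc n) \<omega>)\<^sup>2)"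
    unfolding power2_eq_square by (intro past_fun_mult past_H)
  have i1: "integrable M (\<lambda>\<omega>. transform H n \<omega> * H (Suc n) \<omega>)"
    by (intro bounded_rv_integrable bounded_rv_mult transform_bounded_rv H bdd_H)
  have i2: "integrable M (\<lambda>\<omega>. (H (Suc n) \<omega>)\<^sup>2)"
    unfolding power2_eq_square by (intro bounded_rv_integrable bounded_rv_mult bdd_H)
  have i0: "integrable M (\<lambda>\<omega>. (transform H n \<omega>)\<^sup>2)"
    unfolding power2_eq_square by (intro bounded_rv_integrable bounded_rv_mult transform_bounded_rv H)
  have expand: "(\<lambda>\<omega>. (transform H (Suc n) \<omega>)\<^sup>2) = (\<lambda>\<omega>. (transform H n \<omega>)\<^sup>2
      + 2 * ((transform H n \<omega> * H (Suc n) \<omega>) * Y (Suc n) \<omega>) + (H (Suc n) \<omega>)\<^sup>2 * (Y (Suc n) \<omega>)\<^sup>2)"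
    by (auto simp: transform_Suc power2_eq_square algebra_simps)
  have "expectation (\<lambda>\<omega>. (transform H (Suc n) \<omega>)\<^sup>2) = expectation (\<lambda>\<omega>. (transform H n \<omega>)\<^sup>2)
      + 2 * expectation (\<lambda>\<omega>. (transform H n \<omega> * H (Suc n) \<omega>) * Y (Suc n) \<omega>)
      + expectation (\<lambda>\<omega>. (H (Suc n) \<omega>)\<^sup>2 * (Y (Suc n) \<omega>)\<^sup>2)"
    unfolding expand
    using i0 past_fun_times_innovation(3)[OF _ G1 i1] past_fun_times_innovation(4)[OF _ G2 i2] by simp
  also have "\<dots> = expectation (\<lambda>\<omega>. (transform H n \<omega>)\<^sup>2)
      + sigma2 * expectation (\<lambda>\<omega>. (H (Suc n) \<omega>)\<^sup>2)"
    using past_fun_times_innovation(1)[OF _ G1 i1] past_fun_times_innovation(2)[OF _ G2 i2] by simp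
  finally show ?case using Suc.IH[OF H] by (simp add: algebra_simps)
qed

lemma transform_split:
  "m \<le> N \<Longrightarrow> transform H N \<omega> = transform H m \<omega> + (\<Sum>k=Suc m..N. H k \<omega> * Y k \<omega>)"
proof -
  assume "m \<le> N"
  then obtain d where d: "N = m + d" using le_Suc_ex by blast
  show ?thesis unfolding transform_def d using sum.ub_add_nat[of 1 m "\<lambda>k. H k \<omega> * Y k \<omega>" d] by simp
qed

lemma transform_increments_orthogonal:
  assumes H: "predictable H" and G: "past_fun (Suc m) borel G" "bounded_rv G"
  shows "expectation (\<lambda>\<omega>. G \<omega> * (\<Sum>k=Suc m..N. H k \<omega> * Y k \<omega>)) = 0"
proof -
  have past_GH: "past_fun k borel (\<lambda>\<omega>. G \<omega> * H k \<omega>)" if k: "k \<in> {Suc m..N}" for k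
  proof (rule past_fun_mult)
    show "past_fun k borel G" by (rule past_fun_mono[OF _ G(1)]) (use k in auto)
    show "past_fun k borel (H k)" using H k unfolding predictable_def by simp
  qed
  have int_GH: "integrable M (\<lambda>\<omega>. G \<omega> * H k \<omega>)" if k: "k \<in> {Suc m..N}" for k
    by (intro bounded_rv_integrable bounded_rv_mult G(2) predictable_bounded_rv[OF H]) (use k in auto)
  have "expectation (\<lambda>\<omega>. G \<omega> * (\<Sum>k=Suc m..N. H k \<omega> * Y k \<omega>))
      = (\<Sum>k=Suc m..N. expectation (\<lambda>\<omega>. (G \<omega> * H k \<omega>) * Y k \<omega>))"
    unfolding sum_distrib_left mult.assoc[symmetric]
    by (subst Bochner_Integration.integral_sum) (auto intro!: past_fun_times_innovation(3) past_GH int_GH)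
  also have "\<dots> = 0"
    by (intro sum.neutral ballI past_fun_times_innovation(1) past_GH int_GH) auto
  finally show ?thesis .
qed

subsection \<open>A one-sided Kolmogorov maximal inequality\<close>

definition first_crossing :: "(nat \<Rightarrow> 'a \<Rightarrow> real) \<Rightarrow> real \<Rightarrow> nat \<Rightarrow> 'a \<Rightarrow> real" where
  "first_crossing H c m \<omega> =
     (if c \<le> transform H m \<omega> \<and> (\<forall>j\<in>{1..<m}. transform H j \<omega> < c) then 1 else 0)"

lemma first_crossing_past_fun:
  assumes H: "predictable H" and "m < k" shows "past_fun k borel (first_crossing H c m)"
proof -
  have "past_fun k (count_space UNIV) (\<lambda>\<omega>. transform H j \<omega> < c)" if "j \<in> {1..<m}" for j
    using that \<open>m < k\<close> by (intro past_fun_less past_fun_const transform_past_fun[OF H]) auto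
  then have "past_fun k (count_space UNIV) (\<lambda>\<omega>. \<forall>j\<in>{1..<m}. transform H j \<omega> < c)"
    by (intro past_fun_ball) auto
  moreover have "past_fun k (count_space UNIV) (\<lambda>\<omega>. c \<le> transform H m \<omega>)"
    using \<open>m < k\<close> by (intro past_fun_le past_fun_const transform_past_fun[OF H]) auto
  ultimately show ?thesis unfolding first_crossing_def by (intro past_fun_indicator past_fun_conj)
qed

lemma first_crossing_bounded_rv: "predictable H \<Longrightarrow> bounded_rv (first_crossing H c m)"
  by (rule bounded_rvI[of _ 1])
     (auto simp: first_crossing_def intro: past_fun_measurable[OF first_crossing_past_fun])

lemma sum_first_crossing:
  "(\<Sum>m=1..n. first_crossing H c m \<omega>) = (if \<exists>m\<in>{1..n}. c \<le> transform H m \<omega> then 1 else 0)"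
proof (induction n)
  case (Suc n)
  show ?case
  proof (cases "\<exists>m\<in>{1..n}. c \<le> transform H m \<omega>")
    case True
    then have "first_crossing H c (Suc n) \<omega> = 0"
      unfolding first_crossing_def by (force simp: not_less)
    then show ?thesis using Suc True by auto
  next
    case False
    then have "first_crossing H c (Suc n) \<omega> = (if c \<le> transform H (Suc n) \<omega> then 1 else 0)"
      by (auto simp: first_crossing_def not_le)
    moreover have "(\<exists>m\<in>{1..Suc n}. c \<le> transform H m \<omega>) \<longleftrightarrow> c \<le> transform H (Suc n) \<omega>"
    proof
      assume "c \<le> transform H (Suc n) \<omega>"
      then show "\<exists>m\<in>{1..Suc n}. c \<le> transform H m \<omega>" by (intro bexI[of _ "Suc n"]) auto
    qed (use False in \<open>auto simp: le_Suc_eq\<close>)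
    ultimately show ?thesis using Suc False by simp
  qed
qed simp

text \<open>On the event of first crossing at time m the transform is at least c there, and the later
  increments are orthogonal to everything known at time m.\<close>
lemma first_crossing_second_moment:
  assumes H: "predictable H" and c: "c > 0" and m: "m \<in> {1..N}"
  shows "c\<^sup>2 * expectation (first_crossing H c m)
      \<le> expectation (\<lambda>\<omega>. (transform H N \<omega>)\<^sup>2 * first_crossing H c m \<omega>)"
proof -
  define I where "I = first_crossing H c m"
  define R where "R \<omega> = (\<Sum>k=Suc m..N. H k \<omega> * Y k \<omega>)" for \<omega>
  have bdd_I: "bounded_rv I" unfolding I_def by (rule first_crossing_bounded_rv[OF H])
  have bdd_mt: "bounded_rv (transform H n)" for n by (rule transform_bounded_rv[OF H])
  have bdd_R: "bounded_rv R" unfolding R_def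
    by (rule bounded_rv_sum[where F="\<lambda>i \<omega>. H i \<omega> * Y i \<omega>", OF finite_atLeastAtMost])
       (use m in \<open>auto intro!: bounded_rv_mult predictable_bounded_rv[OF H] bounded_rv_Y\<close>)
  have split: "transform H N \<omega> = transform H m \<omega> + R \<omega>" for \<omega>
    unfolding R_def using m by (intro transform_split) auto
  have "past_fun (Suc m) borel (\<lambda>\<omega>. transform H m \<omega> * I \<omega>)"
    unfolding I_def by (intro past_fun_mult transform_past_fun[OF H] first_crossing_past_fun[OF H]) auto
  moreover have "bounded_rv (\<lambda>\<omega>. transform H m \<omega> * I \<omega>)" by (intro bounded_rv_mult bdd_mt bdd_I)
  ultimately have cross: "expectation (\<lambda>\<omega>. transform H m \<omega> * I \<omega> * R \<omega>) = 0"
    unfolding R_def by (rule transform_increments_orthogonal[OF H])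
  have "c\<^sup>2 * expectation I = expectation (\<lambda>\<omega>. c\<^sup>2 * I \<omega>)" by simp
  also have "\<dots> \<le> expectation (\<lambda>\<omega>. (transform H m \<omega>)\<^sup>2 * I \<omega>)"
  proof (rule integral_mono)
    show "integrable M (\<lambda>\<omega>. c\<^sup>2 * I \<omega>)"
      by (intro bounded_rv_integrable bounded_rv_mult bdd_I bounded_rvI[of _ "c\<^sup>2"]) auto
    show "integrable M (\<lambda>\<omega>. (transform H m \<omega>)\<^sup>2 * I \<omega>)"
      unfolding power2_eq_square by (intro bounded_rv_integrable bounded_rv_mult bdd_I bdd_mt)
    fix \<omega> show "c\<^sup>2 * I \<omega> \<le> (transform H m \<omega>)\<^sup>2 * I \<omega>"
      using c by (auto simp: I_def first_crossing_def intro!: power_mono)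
  qed
  also have "\<dots> \<le> expectation (\<lambda>\<omega>. (transform H m \<omega> + R \<omega>)\<^sup>2 * I \<omega>)"
    by (rule second_moment_orthogonal_increment[OF bdd_mt bdd_I bdd_R _ cross])
       (simp add: I_def first_crossing_def)
  also have "\<dots> = expectation (\<lambda>\<omega>. (transform H N \<omega>)\<^sup>2 * I \<omega>)" by (simp add: split)
  finally show ?thesis unfolding I_def .
qed

lemma transform_maximal_inequality:
  assumes H: "predictable H" and c: "c > 0"
  shows "c\<^sup>2 * expectation (\<lambda>\<omega>. if \<exists>m\<in>{1..N}. c \<le> transform H m \<omega> then 1 else 0)
      \<le> expectation (\<lambda>\<omega>. (transform H N \<omega>)\<^sup>2)"
proof -
  note bdd = first_crossing_bounded_rv[OF H] transform_bounded_rv[OF H]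
  have "c\<^sup>2 * expectation (\<lambda>\<omega>. if \<exists>m\<in>{1..N}. c \<le> transform H m \<omega> then 1 else 0)
      = (\<Sum>m=1..N. c\<^sup>2 * expectation (first_crossing H c m))"
    unfolding sum_first_crossing[symmetric] sum_distrib_left[symmetric]
    by (subst Bochner_Integration.integral_sum) (auto intro!: bounded_rv_integrable bdd)
  also have "\<dots> \<le> (\<Sum>m=1..N. expectation (\<lambda>\<omega>. (transform H N \<omega>)\<^sup>2 * first_crossing H c m \<omega>))"
    by (intro sum_mono first_crossing_second_moment[OF H c])
  also have "\<dots> = expectation (\<lambda>\<omega>. (transform H N \<omega>)\<^sup>2 * (\<Sum>m=1..N. first_crossing H c m \<omega>))"
    unfolding power2_eq_square sum_distrib_left
    by (subst Bochner_Integration.integral_sum) (auto intro!: bounded_rv_integrable bounded_rv_mult bdd)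
  also have "\<dots> \<le> expectation (\<lambda>\<omega>. (transform H N \<omega>)\<^sup>2)"
  proof (rule integral_mono)
    show "integrable M (\<lambda>\<omega>. (transform H N \<omega>)\<^sup>2 * (\<Sum>m=1..N. first_crossing H c m \<omega>))"
      unfolding power2_eq_square by (intro bounded_rv_integrable bounded_rv_mult bounded_rv_sum bdd) auto
    show "integrable M (\<lambda>\<omega>. (transform H N \<omega>)\<^sup>2)"
      unfolding power2_eq_square by (intro bounded_rv_integrable bounded_rv_mult bdd)
    fix \<omega> show "(transform H N \<omega>)\<^sup>2 * (\<Sum>m=1..N. first_crossing H c m \<omega>) \<le> (transform H N \<omega>)\<^sup>2"
      unfolding sum_first_crossing by simp
  qed
  finally show ?thesis .
qed

end

lemma square_le_by_strip:
  fixes t L y Mb :: real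
  assumes "- L - Mb \<le> t" "t \<le> y + Mb" "L > 0" "y \<ge> 0" "Mb \<ge> 0"
    and "\<not> t \<le> -L \<Longrightarrow> \<not> t > y \<Longrightarrow> g"
  shows "t\<^sup>2 \<le> (L + Mb)\<^sup>2 * (if t \<le> -L then 1 else 0) + (y + Mb)\<^sup>2 + (L + y)\<^sup>2 * (if g then 1 else 0)"
proof -
  have sq: "t\<^sup>2 \<le> b\<^sup>2" if "\<bar>t\<bar> \<le> b" for b
    using that by (metis abs_ge_zero abs_le_square_iff abs_of_nonneg order_trans)
  have nonneg: "0 \<le> (L + Mb)\<^sup>2 * (if t \<le> -L then 1 else 0)" "0 \<le> (L + y)\<^sup>2 * (if g then 1 else 0)"
    by auto
  consider "t \<le> -L" | "t > y" | "\<not> t \<le> -L" "\<not> t > y" by linarith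
  then show ?thesis
  proof cases
    case 1
    then have "t\<^sup>2 \<le> (L + Mb)\<^sup>2" using assms by (intro sq) auto
    moreover have "(L + Mb)\<^sup>2 * (if t \<le> -L then 1 else 0) = (L + Mb)\<^sup>2" using 1 by simp
    ultimately show ?thesis using nonneg(2) zero_le_power2[of "y + Mb"] by linarith
  next
    case 2
    then have "t\<^sup>2 \<le> (y + Mb)\<^sup>2" using assms by (intro sq) auto
    then show ?thesis using nonneg by linarith
  next
    case 3
    then have "t\<^sup>2 \<le> (L + y)\<^sup>2" using assms by (intro sq) auto
    moreover have "(L + y)\<^sup>2 * (if g then 1 else 0) = (L + y)\<^sup>2" using 3 assms(6) by simp
    ultimately show ?thesis using nonneg(1) zero_le_power2[of "y + Mb"] by linarith
  qed
qed

text \<open>The arithmetic that turns the second-moment relations of the upper bound (with strip width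
  \<open>L = \<kappa> r\<close>, \<open>r = \<surd>N\<close>, \<open>\<sigma>\<^sup>2 = 4 \<kappa>\<^sup>2\<close>) into \<open>q \<le> C / r\<close>.\<close>
lemma upper_bound_arith:
  fixes s2 r \<kappa> y Mb q d :: real
  assumes s2: "s2 > 0" and r: "r \<ge> 1" and k: "\<kappa> > 0" and sk: "s2 = 4 * \<kappa>\<^sup>2" and y: "y \<ge> 0"
    and Mb: "Mb \<ge> 0" and q: "0 \<le> q" "q \<le> 1" and d: "0 \<le> d"
    and A: "\<kappa> * r * d \<le> y + Mb"
    and B: "s2 * r\<^sup>2 * q \<le> (\<kappa> * r + Mb)\<^sup>2 * d + (y + Mb)\<^sup>2 + (\<kappa> * r + y)\<^sup>2 * q + s2 * r\<^sup>2 * d"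
  shows "q \<le> (2 * ((\<kappa>+Mb)\<^sup>2 * (y+Mb)/\<kappa> + s2*(y+Mb)/\<kappa> + (y+Mb)\<^sup>2 + 2*y\<^sup>2) / s2) / r"
proof -
  define C0 where "C0 = (\<kappa>+Mb)\<^sup>2 * (y+Mb)/\<kappa> + s2*(y+Mb)/\<kappa> + (y+Mb)\<^sup>2 + 2*y\<^sup>2"
  have rd: "r * d \<le> (y + Mb) / \<kappa>" using A k by (simp add: field_simps mult.commute mult.left_commute)
  have h1: "(\<kappa> * r + y)\<^sup>2 \<le> 2 * \<kappa>\<^sup>2 * r\<^sup>2 + 2 * y\<^sup>2"
    using sum_squares_ge_zero[of "\<kappa>*r - y" 0] by (simp add: power2_eq_square algebra_simps)
  have h2: "(\<kappa> * r + y)\<^sup>2 * q \<le> (1/2) * (s2 * r\<^sup>2 * q) + 2 * y\<^sup>2"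
  proof -
    have "(\<kappa> * r + y)\<^sup>2 * q \<le> (2 * \<kappa>\<^sup>2 * r\<^sup>2 + 2 * y\<^sup>2) * q" using h1 q by (intro mult_right_mono) auto
    also have "\<dots> = (1/2) * (s2 * r\<^sup>2 * q) + 2 * y\<^sup>2 * q" by (simp add: sk algebra_simps)
    also have "\<dots> \<le> (1/2) * (s2 * r\<^sup>2 * q) + 2 * y\<^sup>2" using q by (simp add: mult_left_le)
    finally show ?thesis .
  qed
  have h3: "(\<kappa> * r + Mb)\<^sup>2 * d \<le> (\<kappa>+Mb)\<^sup>2 * (y+Mb)/\<kappa> * r"
  proof -
    have "\<kappa> * r + Mb \<le> (\<kappa> + Mb) * r" using r Mb
      by (simp add: algebra_simps) (metis mult_left_mono mult.commute mult_1_right)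
    then have "(\<kappa> * r + Mb)\<^sup>2 \<le> ((\<kappa> + Mb) * r)\<^sup>2" using k r Mb by (intro power_mono) auto
    then have "(\<kappa> * r + Mb)\<^sup>2 * d \<le> (\<kappa> + Mb)\<^sup>2 * r * (r * d)"
      using d by (auto simp: power2_eq_square mult_ac intro!: mult_left_mono)
    also have "\<dots> \<le> (\<kappa> + Mb)\<^sup>2 * r * ((y + Mb) / \<kappa>)" using rd r by (intro mult_left_mono) auto
    finally show ?thesis by (simp add: mult_ac)
  qed
  have h4: "s2 * r\<^sup>2 * d \<le> s2 * (y+Mb)/\<kappa> * r"
  proof -
    have "s2 * r\<^sup>2 * d = s2 * r * (r * d)" by (simp add: power2_eq_square mult_ac)
    also have "\<dots> \<le> s2 * r * ((y + Mb) / \<kappa>)" using rd r s2 by (intro mult_left_mono) auto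
    finally show ?thesis by (simp add: mult_ac)
  qed
  have h5: "(y+Mb)\<^sup>2 + 2*y\<^sup>2 \<le> ((y+Mb)\<^sup>2 + 2*y\<^sup>2) * r"
    using r mult_left_mono[of 1 r "(y+Mb)\<^sup>2 + 2*y\<^sup>2"] by simp
  have "C0 * r = (\<kappa>+Mb)\<^sup>2 * (y+Mb)/\<kappa> * r + s2*(y+Mb)/\<kappa> * r + ((y+Mb)\<^sup>2 + 2*y\<^sup>2) * r"
    unfolding C0_def by (simp add: algebra_simps)
  then have "s2 * r\<^sup>2 * q \<le> 2 * (C0 * r)" using B h2 h3 h4 h5 by linarith
  then have "q * (s2 * r / 2) * r \<le> C0 * r" by (simp add: power2_eq_square mult_ac)
  then have "q * (s2 * r / 2) \<le> C0" using r by simp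
  then have "q \<le> C0 / (s2 * r / 2)" using s2 r by (simp add: field_simps)
  then show ?thesis unfolding C0_def by (simp add: field_simps)
qed

text \<open>The arithmetic of the lower bound (strip width \<open>L = K r\<close>, \<open>K\<^sup>2 = 2 \<sigma>\<^sup>2\<close>, \<open>N = r\<^sup>2\<close>).\<close>
lemma lower_bound_arith:
  fixes s2 r K y Mb q pb pG N :: real
  assumes s2: "s2 > 0" and r: "r \<ge> 1" and K: "K > 0" and sK: "K\<^sup>2 = 2 * s2" and N: "N = r\<^sup>2"
    and y: "y > 0" and Mb: "Mb \<ge> 0" and pb: "0 \<le> pb"
    and A: "y \<le> (y + K * r + Mb) * pG"
    and B: "(K * r + y)\<^sup>2 * pb \<le> s2 * N * pG"
    and C: "pG - pb \<le> q"
  shows "y / (2 * (y + K + Mb)) / r \<le> q"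
proof -
  have Lpos: "K * r > 0" using K r by simp
  have "(K * r)\<^sup>2 \<le> (K * r + y)\<^sup>2" using Lpos y by (intro power_mono) auto
  moreover have "(K * r)\<^sup>2 = 2 * (s2 * N)" using sK N by (simp add: power_mult_distrib)
  ultimately have "2 * (s2 * N) * pb \<le> (K * r + y)\<^sup>2 * pb" using pb by (intro mult_right_mono) auto
  with B have "(s2 * N) * (2 * pb) \<le> (s2 * N) * pG" by (simp add: mult_ac)
  moreover have "s2 * N > 0" using s2 N r by simp
  ultimately have "2 * pb \<le> pG" using mult_le_cancel_left_pos by blast
  with C have q2: "pG / 2 \<le> q" by simp
  have pos: "y + K * r + Mb > 0" using y Lpos Mb by simp
  have "y / (y + K * r + Mb) \<le> pG" using A by (subst pos_divide_le_eq[OF pos]) (simp add: mult.commute)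
  moreover have "y / ((y + K + Mb) * r) \<le> y / (y + K * r + Mb)"
  proof (rule divide_left_mono)
    have "y * 1 \<le> y * r" "Mb * 1 \<le> Mb * r" using r y Mb by (intro mult_left_mono; simp)+
    then show "y + K * r + Mb \<le> (y + K + Mb) * r" by (simp add: distrib_right)
  qed (use y pos r K Mb in \<open>auto intro!: mult_pos_pos\<close>)
  ultimately have "y / ((y + K + Mb) * r) \<le> pG" by linarith
  then have "y / ((y + K + Mb) * r) / 2 \<le> pG / 2" by (simp add: divide_right_mono)
  then have "y / ((y + K + Mb) * r) / 2 \<le> q" using q2 by linarith
  then show ?thesis by (simp add: field_simps)
qed

lemma bigtheta_inv_sqrt:
  fixes f :: "nat \<Rightarrow> real"
  assumes c: "c > 0" and bounds: "\<And>N. N \<ge> 1 \<Longrightarrow> c / sqrt N \<le> f N \<and> f N \<le> C / sqrt N"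
  shows "f \<in> \<Theta>(\<lambda>N. 1 / sqrt (real N))"
proof (rule bigthetaI'[of c "max C 1"])
  show "\<forall>\<^sub>F N in at_top. c * norm (1 / sqrt (real N)) \<le> norm (f N)
      \<and> norm (f N) \<le> max C 1 * norm (1 / sqrt (real N))"
    unfolding eventually_at_top_linorder
  proof (intro exI[of _ 1] allI impI)
    fix N :: nat assume N: "N \<ge> 1"
    have "0 < c / sqrt N" "C / sqrt N \<le> max C 1 / sqrt N" using c N by (auto intro: divide_right_mono)
    then show "c * norm (1 / sqrt (real N)) \<le> norm (f N) \<and> norm (f N) \<le> max C 1 * norm (1 / sqrt N)"
      using bounds[OF N] by auto
  qed
qed (use c in auto)

section \<open>Persistence of the innovation random walk\<close>

context iid_bounded_innovations
begin

definition walk :: "nat \<Rightarrow> 'a \<Rightarrow> real" where "walk n \<omega> = (\<Sum>i=1..n. Y i \<omega>)"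

definition stays_below :: "real \<Rightarrow> nat \<Rightarrow> 'a \<Rightarrow> bool" where
  "stays_below y n \<omega> \<longleftrightarrow> (\<forall>j\<in>{1..n}. walk j \<omega> \<le> y)"

definition in_strip :: "real \<Rightarrow> real \<Rightarrow> nat \<Rightarrow> 'a \<Rightarrow> bool" where
  "in_strip L y j \<omega> \<longleftrightarrow> -L < walk j \<omega> \<and> walk j \<omega> \<le> y"

definition stays_in_strip :: "real \<Rightarrow> real \<Rightarrow> nat \<Rightarrow> 'a \<Rightarrow> bool" where
  "stays_in_strip L y n \<omega> \<longleftrightarrow> (\<forall>j\<in>{1..n}. in_strip L y j \<omega>)"

text \<open>The walk stopped when it first leaves the strip, as a martingale transform.\<close>
definition stop_weight :: "real \<Rightarrow> real \<Rightarrow> nat \<Rightarrow> 'a \<Rightarrow> real" where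
  "stop_weight L y k \<omega> = (if stays_in_strip L y (k - 1) \<omega> then 1 else 0)"

definition stopped_walk :: "real \<Rightarrow> real \<Rightarrow> nat \<Rightarrow> 'a \<Rightarrow> real" where
  "stopped_walk L y = transform (stop_weight L y)"

text \<open>The increments of the walk after it has left the strip downwards, again a martingale
  transform; it controls whether the walk can climb back above y.\<close>
definition restart_weight :: "real \<Rightarrow> real \<Rightarrow> nat \<Rightarrow> 'a \<Rightarrow> real" where
  "restart_weight L y k \<omega> =
     (if \<not> stays_in_strip L y (k - 1) \<omega> \<and> stopped_walk L y (k - 1) \<omega> \<le> -L then 1 else 0)"

definition walk_after_low_exit :: "real \<Rightarrow> real \<Rightarrow> nat \<Rightarrow> 'a \<Rightarrow> real" where
  "walk_after_low_exit L y = transform (restart_weight L y)"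

lemma walk_0[simp]: "walk 0 \<omega> = 0" by (simp add: walk_def)
lemma walk_Suc: "walk (Suc n) \<omega> = walk n \<omega> + Y (Suc n) \<omega>" by (simp add: walk_def)

lemma walk_past_fun: "n < k \<Longrightarrow> past_fun k borel (walk n)"
  unfolding walk_def
  by (rule past_fun_sum[where F="\<lambda>i. Y i", OF finite_atLeastAtMost]) (auto intro: past_fun_Y)

lemma stays_in_strip_past_fun: "n < k \<Longrightarrow> past_fun k (count_space UNIV) (stays_in_strip L y n)"
  unfolding stays_in_strip_def in_strip_def
  by (intro past_fun_ball past_fun_conj past_fun_less past_fun_le past_fun_const walk_past_fun) auto

lemma stays_below_past_fun: "n < k \<Longrightarrow> past_fun k (count_space UNIV) (stays_below y n)"
  unfolding stays_below_def by (intro past_fun_ball past_fun_le past_fun_const walk_past_fun) auto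

lemma predictable_stop_weight: "predictable (stop_weight L y)"
  unfolding predictable_def stop_weight_def
  by (auto intro!: past_fun_indicator stays_in_strip_past_fun)

lemma predictable_restart_weight: "predictable (restart_weight L y)"
  unfolding predictable_def restart_weight_def stopped_walk_def
  by (auto intro!: past_fun_indicator past_fun_conj past_fun_not stays_in_strip_past_fun past_fun_le
      transform_past_fun[OF predictable_stop_weight] past_fun_const)

lemma bounded_rv_stays_below: "bounded_rv (\<lambda>\<omega>. if stays_below y n \<omega> then 1 else 0)"
  by (intro bounded_rv_indicator past_fun_measurable[OF stays_below_past_fun[of n "Suc n"]]) simp

lemma bounded_rv_stop_weight: "bounded_rv (stop_weight L y k)"
  unfolding stop_weight_def
  by (intro bounded_rv_indicator past_fun_measurable[OF stays_in_strip_past_fun[of "k - 1" "Suc (k - 1)"]]) simp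

lemma bounded_rv_stopped_walk: "bounded_rv (stopped_walk L y n)"
  unfolding stopped_walk_def by (rule transform_bounded_rv[OF predictable_stop_weight])

lemma stays_below_sets: "{\<omega>\<in>space M. stays_below y N \<omega>} \<in> sets M"
  by (rule predE, rule past_fun_measurable, rule stays_below_past_fun[of N "Suc N"]) simp

lemma prob_stays_below:
  "prob {\<omega>\<in>space M. stays_below y N \<omega>} = expectation (\<lambda>\<omega>. if stays_below y N \<omega> then 1 else 0)"
proof -
  have "expectation (\<lambda>\<omega>. if stays_below y N \<omega> then 1 else 0)
      = expectation (indicator {\<omega>\<in>space M. stays_below y N \<omega>})"
    by (intro Bochner_Integration.integral_cong) (auto simp: indicator_def)
  also have "\<dots> = prob {\<omega>\<in>space M. stays_below y N \<omega>}"
    by (simp add: Int_absorb2 subsetI)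
  finally show ?thesis by simp
qed

lemma stays_in_strip_mono: "m \<le> n \<Longrightarrow> stays_in_strip L y n \<omega> \<Longrightarrow> stays_in_strip L y m \<omega>"
  unfolding stays_in_strip_def by auto

lemma first_exit:
  assumes "\<not> stays_in_strip L y n \<omega>"
  obtains s where "s \<in> {1..n}" "stays_in_strip L y (s - 1) \<omega>" "\<not> in_strip L y s \<omega>"
proof -
  define P where "P j \<longleftrightarrow> j \<in> {1..n} \<and> \<not> in_strip L y j \<omega>" for j
  have ex: "\<exists>j. P j" using assms unfolding stays_in_strip_def P_def by auto
  define s where "s = (LEAST j. P j)"
  have Ps: "P s" unfolding s_def by (rule LeastI_ex[OF ex])
  have "stays_in_strip L y (s - 1) \<omega>"
    unfolding stays_in_strip_def
  proof
    fix j assume j: "j \<in> {1..s - 1}"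
    then have "\<not> P j" unfolding s_def by (intro not_less_Least) auto
    then show "in_strip L y j \<omega>" using j Ps unfolding P_def by auto
  qed
  then show ?thesis using Ps that unfolding P_def by blast
qed

lemma stopped_walk_Suc:
  "stopped_walk L y (Suc n) \<omega> = stopped_walk L y n \<omega> + stop_weight L y (Suc n) \<omega> * Y (Suc n) \<omega>"
  unfolding stopped_walk_def by (rule transform_Suc)

lemma walk_after_low_exit_Suc: "walk_after_low_exit L y (Suc n) \<omega>
    = walk_after_low_exit L y n \<omega> + restart_weight L y (Suc n) \<omega> * Y (Suc n) \<omega>"
  unfolding walk_after_low_exit_def by (rule transform_Suc)

lemma stopped_walk_in_strip: "stays_in_strip L y n \<omega> \<Longrightarrow> stopped_walk L y n \<omega> = walk n \<omega>"
proof (induction n)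
  case 0 then show ?case by (simp add: stopped_walk_def transform_def)
next
  case (Suc n)
  then have "stays_in_strip L y n \<omega>" using stays_in_strip_mono[of n "Suc n"] by simp
  with Suc show ?case by (simp add: stopped_walk_Suc walk_Suc stop_weight_def)
qed

lemma stopped_walk_after_exit:
  assumes s: "1 \<le> s" "stays_in_strip L y (s - 1) \<omega>" "\<not> in_strip L y s \<omega>" and sm: "s \<le> m"
  shows "stopped_walk L y m \<omega> = walk s \<omega>"
  using sm
proof (induction m rule: dec_induct)
  case base
  obtain s' where s': "s = Suc s'" using s(1) by (cases s) auto
  show ?case using s(2) by (simp add: s' stopped_walk_Suc walk_Suc stop_weight_def stopped_walk_in_strip)
next
  case (step n)
  have "\<not> stays_in_strip L y n \<omega>" using s(1,3) step(1) unfolding stays_in_strip_def by auto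
  then show ?case using step by (simp add: stopped_walk_Suc stop_weight_def)
qed

lemma walk_after_low_exit_eq:
  assumes s: "1 \<le> s" "stays_in_strip L y (s - 1) \<omega>" "\<not> in_strip L y s \<omega>" "walk s \<omega> \<le> -L"
    and sm: "s \<le> m"
  shows "walk_after_low_exit L y m \<omega> = walk m \<omega> - walk s \<omega>"
  using sm
proof (induction m rule: dec_induct)
  case base
  have "restart_weight L y k \<omega> = 0" if "k \<in> {1..s}" for k
  proof -
    have "stays_in_strip L y (k - 1) \<omega>"
      using that s(2) stays_in_strip_mono[of "k - 1" "s - 1" L y \<omega>] by auto
    then show ?thesis by (simp add: restart_weight_def)
  qed
  then show ?case by (simp add: walk_after_low_exit_def transform_def)
next
  case (step n)
  have "\<not> stays_in_strip L y n \<omega>" using s(1,3) step(1) unfolding stays_in_strip_def by auto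
  moreover have "stopped_walk L y n \<omega> = walk s \<omega>" using stopped_walk_after_exit[OF s(1-3) step(1)] .
  ultimately have "restart_weight L y (Suc n) \<omega> = 1" using s(4) by (simp add: restart_weight_def)
  then show ?case using step by (simp add: walk_after_low_exit_Suc walk_Suc)
qed

text \<open>Steps of size at most Mb cannot overshoot the strip by more than Mb.\<close>
lemma stopped_walk_range:
  assumes L: "L > 0" and y: "y \<ge> 0" and bd: "\<forall>k\<ge>1. \<bar>Y k \<omega>\<bar> \<le> Mb"
  shows "- L - Mb \<le> stopped_walk L y n \<omega> \<and> stopped_walk L y n \<omega> \<le> y + Mb"
proof (cases "stays_in_strip L y n \<omega>")
  case True
  then have "in_strip L y n \<omega> \<or> n = 0" unfolding stays_in_strip_def by auto
  then show ?thesis using stopped_walk_in_strip[OF True] L y Mb_nonneg by (auto simp: in_strip_def)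
next
  case False
  then obtain s where s: "s \<in> {1..n}" "stays_in_strip L y (s - 1) \<omega>" "\<not> in_strip L y s \<omega>"
    by (rule first_exit)
  obtain s' where s': "s = Suc s'" using s(1) by (cases s) auto
  have before: "-L \<le> walk s' \<omega> \<and> walk s' \<omega> \<le> y"
  proof (cases "s' = 0")
    case False
    then have "in_strip L y s' \<omega>" using s(2) unfolding stays_in_strip_def s' by auto
    then show ?thesis unfolding in_strip_def by auto
  qed (use L y in simp)
  have "\<bar>Y s \<omega>\<bar> \<le> Mb" using bd s(1) by auto
  moreover have "stopped_walk L y n \<omega> = walk s' \<omega> + Y s \<omega>"
    using stopped_walk_after_exit[OF _ s(2,3)] s(1) by (simp add: s' walk_Suc)
  ultimately show ?thesis using before by (simp add: abs_le_iff)
qed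

lemma stopped_walk_exit:
  assumes "\<not> stays_in_strip L y n \<omega>"
  shows "stopped_walk L y n \<omega> \<le> -L \<or> stopped_walk L y n \<omega> > y"
proof -
  obtain s where s: "s \<in> {1..n}" "stays_in_strip L y (s - 1) \<omega>" "\<not> in_strip L y s \<omega>"
    using assms by (rule first_exit)
  then have "stopped_walk L y n \<omega> = walk s \<omega>" using stopped_walk_after_exit[OF _ s(2,3)] by auto
  then show ?thesis using s(3) unfolding in_strip_def by auto
qed

lemma stopped_walk_range_AE:
  assumes "L > 0" "y \<ge> 0"
  shows "AE \<omega> in M. - L - Mb \<le> stopped_walk L y N \<omega> \<and> stopped_walk L y N \<omega> \<le> y + Mb"
  using Y_bounded_AE by eventually_elim (intro stopped_walk_range assms, auto)

subsection \<open>Upper bound: the walk stopped on leaving the strip\<close>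

text \<open>Optional stopping: the stopped walk is centred and at most \<open>y + Mb\<close>, so it can be at or below
  \<open>-L\<close> only with probability at most \<open>(y + Mb) / L\<close>.\<close>
lemma low_exit_prob_bound:
  assumes L: "L > 0" and y: "y \<ge> 0"
  shows "L * expectation (\<lambda>\<omega>. if stopped_walk L y N \<omega> \<le> -L then 1 else 0 :: real) \<le> y + Mb"
proof -
  have iT: "integrable M (stopped_walk L y N)"
    by (rule bounded_rv_integrable[OF bounded_rv_stopped_walk])
  have id: "integrable M (\<lambda>\<omega>. if stopped_walk L y N \<omega> \<le> -L then 1 else 0 :: real)"
    by (intro bounded_rv_integrable bounded_rv_indicator_le bounded_rv_stopped_walk)
  have "L * expectation (\<lambda>\<omega>. if stopped_walk L y N \<omega> \<le> -L then 1 else 0 :: real)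
      = expectation (\<lambda>\<omega>. L * (if stopped_walk L y N \<omega> \<le> -L then 1 else 0 :: real))" by simp
  also have "\<dots> \<le> expectation (\<lambda>\<omega>. (y + Mb) - stopped_walk L y N \<omega>)"
  proof (rule integral_mono_AE)
    show "AE \<omega> in M. L * (if stopped_walk L y N \<omega> \<le> -L then 1 else 0 :: real) \<le> (y + Mb) - stopped_walk L y N \<omega>"
      using stopped_walk_range_AE[OF L y] by eventually_elim (use y Mb_nonneg in auto)
  qed (use iT id in auto)
  also have "\<dots> = y + Mb"
    using iT transform_mean[OF predictable_stop_weight]
    by (simp add: stopped_walk_def Bochner_Integration.integral_diff prob_space)
  finally show ?thesis .
qed

text \<open>A path staying below y either is still in the strip at every step k (weight 1) or has exited
  it downwards, in which case the stopped walk ends at or below \<open>-L\<close>.\<close>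
lemma stays_below_le_weights:
  "real N * expectation (\<lambda>\<omega>. if stays_below y N \<omega> then 1 else 0 :: real)
    \<le> (\<Sum>k=1..N. expectation (stop_weight L y k))
      + real N * expectation (\<lambda>\<omega>. if stopped_walk L y N \<omega> \<le> -L then 1 else 0 :: real)"
proof -
  have pointwise: "(if stays_below y N \<omega> then 1 else 0 :: real)
      \<le> stop_weight L y k \<omega> + (if stopped_walk L y N \<omega> \<le> -L then 1 else 0 :: real)"
    if k: "k \<in> {1..N}" for k \<omega>
  proof (cases "stays_below y N \<omega> \<and> \<not> stays_in_strip L y (k - 1) \<omega>")
    case True
    then obtain s where s: "s \<in> {1..k - 1}" "stays_in_strip L y (s - 1) \<omega>" "\<not> in_strip L y s \<omega>"
      by (auto elim: first_exit)
    have "walk s \<omega> \<le> y" using True s(1) k unfolding stays_below_def by auto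
    then have "walk s \<omega> \<le> -L" using s(3) unfolding in_strip_def by auto
    moreover have "stopped_walk L y N \<omega> = walk s \<omega>"
      using stopped_walk_after_exit[OF _ s(2,3)] s(1) k by auto
    ultimately show ?thesis by (simp add: stop_weight_def)
  qed (auto simp: stop_weight_def)
  have int: "integrable M (\<lambda>\<omega>. if stays_below y N \<omega> then 1 else 0 :: real)"
    "integrable M (\<lambda>\<omega>. if stopped_walk L y N \<omega> \<le> -L then 1 else 0 :: real)"
    "\<And>k. integrable M (stop_weight L y k)"
    by (intro bounded_rv_integrable bounded_rv_stays_below bounded_rv_indicator_le
        bounded_rv_stopped_walk bounded_rv_stop_weight)+
  have summed: "real N * (if stays_below y N \<omega> then 1 else 0 :: real)
      \<le> (\<Sum>k=1..N. stop_weight L y k \<omega>) + real N * (if stopped_walk L y N \<omega> \<le> -L then 1 else 0 :: real)" for \<omega>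
  proof -
    have "real N * (if stays_below y N \<omega> then 1 else 0 :: real) = (\<Sum>k=1..N. (if stays_below y N \<omega> then 1 else 0 :: real))"
      by simp
    also have "\<dots> \<le> (\<Sum>k=1..N. stop_weight L y k \<omega> + (if stopped_walk L y N \<omega> \<le> -L then 1 else 0 :: real))"
      by (intro sum_mono pointwise)
    finally show ?thesis by (simp add: sum.distrib)
  qed
  have "real N * expectation (\<lambda>\<omega>. if stays_below y N \<omega> then 1 else 0 :: real)
      = expectation (\<lambda>\<omega>. real N * (if stays_below y N \<omega> then 1 else 0 :: real))" by simp
  also have "\<dots> \<le> expectation (\<lambda>\<omega>. (\<Sum>k=1..N. stop_weight L y k \<omega>)
      + real N * (if stopped_walk L y N \<omega> \<le> -L then 1 else 0 :: real))"
    by (rule integral_mono) (use int summed in auto)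
  also have "\<dots> = (\<Sum>k=1..N. expectation (stop_weight L y k))
      + real N * expectation (\<lambda>\<omega>. if stopped_walk L y N \<omega> \<le> -L then 1 else 0 :: real)"
    using int by (simp add: Bochner_Integration.integral_add Bochner_Integration.integral_sum)
  finally show ?thesis .
qed

lemma stopped_walk_second_moment_bound:
  fixes N :: nat
  assumes L: "L > 0" and y: "y \<ge> 0"
  shows "expectation (\<lambda>\<omega>. (stopped_walk L y N \<omega>)\<^sup>2)
    \<le> (L + Mb)\<^sup>2 * expectation (\<lambda>\<omega>. if stopped_walk L y N \<omega> \<le> -L then 1 else 0 :: real) + (y + Mb)\<^sup>2
      + (L + y)\<^sup>2 * expectation (\<lambda>\<omega>. if stays_below y N \<omega> then 1 else 0 :: real)"
proof -
  have id: "integrable M (\<lambda>\<omega>. if stopped_walk L y N \<omega> \<le> -L then 1 else 0 :: real)"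
    and iq: "integrable M (\<lambda>\<omega>. if stays_below y N \<omega> then 1 else 0 :: real)"
    by (intro bounded_rv_integrable bounded_rv_indicator_le bounded_rv_stopped_walk
        bounded_rv_stays_below)+
  have "expectation (\<lambda>\<omega>. (stopped_walk L y N \<omega>)\<^sup>2)
      \<le> expectation (\<lambda>\<omega>. (L + Mb)\<^sup>2 * (if stopped_walk L y N \<omega> \<le> -L then 1 else 0 :: real)
        + (y + Mb)\<^sup>2 + (L + y)\<^sup>2 * (if stays_below y N \<omega> then 1 else 0 :: real))"
  proof (rule integral_mono_AE)
    show "integrable M (\<lambda>\<omega>. (stopped_walk L y N \<omega>)\<^sup>2)"
      unfolding power2_eq_square by (intro bounded_rv_integrable bounded_rv_mult bounded_rv_stopped_walk)
    show "AE \<omega> in M. (stopped_walk L y N \<omega>)\<^sup>2 \<le> (L + Mb)\<^sup>2 * (if stopped_walk L y N \<omega> \<le> -L then 1 else 0 :: real)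
        + (y + Mb)\<^sup>2 + (L + y)\<^sup>2 * (if stays_below y N \<omega> then 1 else 0 :: real)"
      using stopped_walk_range_AE[OF L y, of N]
    proof eventually_elim
      case (elim \<omega>)
      have inside: "stays_below y N \<omega>"
        if "\<not> stopped_walk L y N \<omega> \<le> -L" "\<not> stopped_walk L y N \<omega> > y"
        using stopped_walk_exit[of L y N \<omega>] that
        unfolding stays_in_strip_def stays_below_def in_strip_def by auto
      show ?case by (rule square_le_by_strip[OF _ _ L y Mb_nonneg inside]) (use elim in auto)
    qed
  qed (use id iq in auto)
  also have "\<dots> = (L + Mb)\<^sup>2 * expectation (\<lambda>\<omega>. if stopped_walk L y N \<omega> \<le> -L then 1 else 0 :: real)
      + (y + Mb)\<^sup>2 + (L + y)\<^sup>2 * expectation (\<lambda>\<omega>. if stays_below y N \<omega> then 1 else 0 :: real)"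
    using id iq by (simp add: Bochner_Integration.integral_add prob_space)
  finally show ?thesis .
qed

text \<open>Collecting the relations between \<open>q = P(stays below y)\<close> and \<open>d = P(low exit)\<close>, using the
  isometry \<open>E[T\<^sup>2] = \<sigma>\<^sup>2 \<Sum> E[stop_weight]\<close>.\<close>
lemma stays_below_upper_relations:
  fixes N :: nat
  assumes L: "L > 0" and y: "y \<ge> 0"
  defines "q \<equiv> expectation (\<lambda>\<omega>. if stays_below y N \<omega> then 1 else 0 :: real)"
    and "d \<equiv> expectation (\<lambda>\<omega>. if stopped_walk L y N \<omega> \<le> -L then 1 else 0 :: real)"
  shows "sigma2 * N * q \<le> (L + Mb)\<^sup>2 * d + (y + Mb)\<^sup>2 + (L + y)\<^sup>2 * q + sigma2 * N * d"
    and "0 \<le> q" "q \<le> 1" "0 \<le> d"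
proof -
  show "0 \<le> q" "0 \<le> d" unfolding q_def d_def by (auto intro!: integral_nonneg_AE)
  have "q \<le> expectation (\<lambda>\<omega>. 1::real)"
    unfolding q_def by (rule integral_mono) (auto intro: bounded_rv_integrable[OF bounded_rv_stays_below])
  then show "q \<le> 1" by (simp add: prob_space)
  have "(\<lambda>\<omega>. (stop_weight L y k \<omega>)\<^sup>2) = stop_weight L y k" for k
    by (auto simp: stop_weight_def fun_eq_iff)
  then have "expectation (\<lambda>\<omega>. (stopped_walk L y N \<omega>)\<^sup>2)
      = sigma2 * (\<Sum>k=1..N. expectation (stop_weight L y k))"
    unfolding stopped_walk_def using transform_second_moment[OF predictable_stop_weight] by simp
  then show "sigma2 * N * q \<le> (L + Mb)\<^sup>2 * d + (y + Mb)\<^sup>2 + (L + y)\<^sup>2 * q + sigma2 * N * d"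
    using stays_below_le_weights[of N y L] stopped_walk_second_moment_bound[OF L y, of N] sigma2_pos
    unfolding q_def d_def by (smt (verit, ccfv_SIG) mult.assoc mult_left_mono distrib_left)
qed

text \<open>Upper bound: \<open>P(walk stays below y up to N) \<le> C / \<surd>N\<close>, with strip width \<open>L = \<sigma> \<surd>N / 2\<close>.\<close>
lemma stays_below_upper:
  assumes y: "y \<ge> 0"
  obtains C where "\<And>N. N \<ge> 1 \<Longrightarrow> prob {\<omega>\<in>space M. stays_below y N \<omega>} \<le> C / sqrt (real N)"
proof -
  define \<kappa> where "\<kappa> = sqrt sigma2 / 2"
  have k: "\<kappa> > 0" using sigma2_pos by (simp add: \<kappa>_def)
  have sk: "sigma2 = 4 * \<kappa>\<^sup>2" using sigma2_pos by (simp add: \<kappa>_def power_divide)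
  define C where "C = 2 * ((\<kappa>+Mb)\<^sup>2 * (y+Mb)/\<kappa> + sigma2*(y+Mb)/\<kappa> + (y+Mb)\<^sup>2 + 2*y\<^sup>2) / sigma2"
  have "prob {\<omega>\<in>space M. stays_below y N \<omega>} \<le> C / sqrt (real N)" if N: "N \<ge> 1" for N :: nat
  proof -
    define r where "r = sqrt (real N)"
    have r: "r \<ge> 1" using N by (simp add: r_def)
    have rN: "real N = r\<^sup>2" by (simp add: r_def)
    have L: "\<kappa> * r > 0" using k r by simp
    note U = stays_below_upper_relations[OF L y, of N]
    show ?thesis unfolding C_def r_def[symmetric] prob_stays_below
      by (rule upper_bound_arith[OF sigma2_pos r k sk y Mb_nonneg U(2,3,4) low_exit_prob_bound[OF L y]])
         (use U(1) in \<open>simp add: rN\<close>)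
  qed
  then show ?thesis by (rule that)
qed

subsection \<open>Lower bound: stopped walk and Kolmogorov's inequality\<close>

text \<open>The stopped walk is centred and at least \<open>-L - Mb\<close>, so it ends at or below y with probability
  at least \<open>y / (y + L + Mb)\<close>.\<close>
lemma stopped_walk_ends_low:
  assumes L: "L > 0" and y: "y \<ge> 0"
  shows "y \<le> (y + L + Mb) * expectation (\<lambda>\<omega>. if stopped_walk L y N \<omega> \<le> y then 1 else 0 :: real)"
proof -
  have iT: "integrable M (stopped_walk L y N)"
    by (rule bounded_rv_integrable[OF bounded_rv_stopped_walk])
  have iG: "integrable M (\<lambda>\<omega>. if stopped_walk L y N \<omega> \<le> y then 1 else 0 :: real)"
    by (intro bounded_rv_integrable bounded_rv_indicator_le bounded_rv_stopped_walk)
  have "expectation (\<lambda>\<omega>. y - (y + L + Mb) * (if stopped_walk L y N \<omega> \<le> y then 1 else 0 :: real))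
      \<le> expectation (stopped_walk L y N)"
  proof (rule integral_mono_AE)
    show "AE \<omega> in M. y - (y + L + Mb) * (if stopped_walk L y N \<omega> \<le> y then 1 else 0 :: real) \<le> stopped_walk L y N \<omega>"
      using stopped_walk_range_AE[OF L y] by eventually_elim auto
  qed (use iT iG in auto)
  then show ?thesis using iG transform_mean[OF predictable_stop_weight]
    by (simp add: stopped_walk_def Bochner_Integration.integral_diff prob_space)
qed

text \<open>Kolmogorov's inequality for the increments after a low exit: climbing \<open>L + y\<close> above the exit
  point is unlikely, relative to the probability of a low end of the stopped walk.\<close>
lemma climb_after_low_exit_bound:
  assumes L: "L > 0" and y: "y \<ge> 0"
  shows "(L + y)\<^sup>2 * expectation (\<lambda>\<omega>. if \<exists>m\<in>{1..N}. L + y \<le> walk_after_low_exit L y m \<omega> then 1 else 0 :: real)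
    \<le> sigma2 * N * expectation (\<lambda>\<omega>. if stopped_walk L y N \<omega> \<le> y then 1 else 0 :: real)"
proof -
  have weight_le: "(restart_weight L y k \<omega>)\<^sup>2 \<le> (if stopped_walk L y N \<omega> \<le> y then 1 else 0 :: real)"
    if k: "k \<in> {1..N}" for k \<omega>
  proof (cases "\<not> stays_in_strip L y (k - 1) \<omega> \<and> stopped_walk L y (k - 1) \<omega> \<le> -L")
    case True
    then obtain s where s: "s \<in> {1..k - 1}" "stays_in_strip L y (s - 1) \<omega>" "\<not> in_strip L y s \<omega>"
      by (auto elim: first_exit)
    have "stopped_walk L y (k - 1) \<omega> = walk s \<omega>" "stopped_walk L y N \<omega> = walk s \<omega>"
      using stopped_walk_after_exit[OF _ s(2,3)] s(1) k by auto
    then have "stopped_walk L y N \<omega> \<le> y" using True L y by auto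
    then show ?thesis by (simp add: restart_weight_def)
  qed (auto simp: restart_weight_def)
  have iG: "integrable M (\<lambda>\<omega>. if stopped_walk L y N \<omega> \<le> y then 1 else 0 :: real)"
    by (intro bounded_rv_integrable bounded_rv_indicator_le bounded_rv_stopped_walk)
  have "(L + y)\<^sup>2 * expectation (\<lambda>\<omega>. if \<exists>m\<in>{1..N}. L + y \<le> walk_after_low_exit L y m \<omega> then 1 else 0 :: real)
      \<le> expectation (\<lambda>\<omega>. (walk_after_low_exit L y N \<omega>)\<^sup>2)"
    unfolding walk_after_low_exit_def using L y
    by (intro transform_maximal_inequality predictable_restart_weight) auto
  also have "\<dots> = sigma2 * (\<Sum>k=1..N. expectation (\<lambda>\<omega>. (restart_weight L y k \<omega>)\<^sup>2))"
    unfolding walk_after_low_exit_def by (rule transform_second_moment[OF predictable_restart_weight])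
  also have "\<dots> \<le> sigma2 * (\<Sum>k=1..N. expectation (\<lambda>\<omega>. if stopped_walk L y N \<omega> \<le> y then 1 else 0 :: real))"
  proof (intro mult_left_mono sum_mono integral_mono iG)
    fix k assume k: "k \<in> {1..N}"
    show "integrable M (\<lambda>\<omega>. (restart_weight L y k \<omega>)\<^sup>2)" unfolding power2_eq_square
      using k by (intro bounded_rv_integrable bounded_rv_mult predictable_bounded_rv
          predictable_restart_weight) auto
  qed (use weight_le sigma2_pos in auto)
  finally show ?thesis by (simp add: mult.assoc)
qed

lemma stays_below_if_no_climb:
  assumes L: "L > 0" and y: "y \<ge> 0" and low: "stopped_walk L y N \<omega> \<le> y"
    and no_climb: "\<not> (\<exists>m\<in>{1..N}. L + y \<le> walk_after_low_exit L y m \<omega>)"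
  shows "stays_below y N \<omega>"
proof (cases "stays_in_strip L y N \<omega>")
  case True then show ?thesis unfolding stays_in_strip_def stays_below_def in_strip_def by auto
next
  case False
  then obtain s where s: "s \<in> {1..N}" "stays_in_strip L y (s - 1) \<omega>" "\<not> in_strip L y s \<omega>"
    by (rule first_exit)
  have "stopped_walk L y N \<omega> = walk s \<omega>" using stopped_walk_after_exit[OF _ s(2,3)] s(1) by auto
  then have exit_low: "walk s \<omega> \<le> -L" using low s(3) unfolding in_strip_def by auto
  show ?thesis unfolding stays_below_def
  proof
    fix j assume j: "j \<in> {1..N}"
    show "walk j \<omega> \<le> y"
    proof (cases "j < s")
      case True
      then have "in_strip L y j \<omega>" using s(2) j unfolding stays_in_strip_def by auto
      then show ?thesis unfolding in_strip_def by auto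
    next
      case False
      then have "walk_after_low_exit L y j \<omega> = walk j \<omega> - walk s \<omega>"
        using walk_after_low_exit_eq[OF _ s(2,3) exit_low] s(1) by auto
      moreover have "\<not> L + y \<le> walk_after_low_exit L y j \<omega>" using no_climb j by blast
      ultimately show ?thesis using exit_low by auto
    qed
  qed
qed

lemma stays_below_lower_relation:
  assumes L: "L > 0" and y: "y \<ge> 0"
  shows "expectation (\<lambda>\<omega>. if stopped_walk L y N \<omega> \<le> y then 1 else 0 :: real)
      - expectation (\<lambda>\<omega>. if \<exists>m\<in>{1..N}. L + y \<le> walk_after_low_exit L y m \<omega> then 1 else 0 :: real)
    \<le> expectation (\<lambda>\<omega>. if stays_below y N \<omega> then 1 else 0 :: real)"
proof -
  have "past_fun (Suc N) (count_space UNIV)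
      (\<lambda>\<omega>. \<not> (\<forall>m\<in>{1..N}. \<not> L + y \<le> walk_after_low_exit L y m \<omega>))"
    unfolding walk_after_low_exit_def
    by (intro past_fun_not past_fun_ball past_fun_le past_fun_const
        transform_past_fun[OF predictable_restart_weight]) auto
  then have "(\<lambda>\<omega>. \<exists>m\<in>{1..N}. L + y \<le> walk_after_low_exit L y m \<omega>) \<in> measurable M (count_space UNIV)"
    by (auto dest: past_fun_measurable)
  then have int1: "integrable M (\<lambda>\<omega>. if \<exists>m\<in>{1..N}. L + y \<le> walk_after_low_exit L y m \<omega> then 1 else 0 :: real)"
    by (intro bounded_rv_integrable bounded_rv_indicator)
  have int2: "integrable M (\<lambda>\<omega>. if stopped_walk L y N \<omega> \<le> y then 1 else 0 :: real)"
    by (intro bounded_rv_integrable bounded_rv_indicator_le bounded_rv_stopped_walk)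
  have int3: "integrable M (\<lambda>\<omega>. if stays_below y N \<omega> then 1 else 0 :: real)"
    by (intro bounded_rv_integrable bounded_rv_stays_below)
  note int = int1 int2 int3
  have pointwise: "(if stopped_walk L y N \<omega> \<le> y then 1 else 0 :: real)
      - (if \<exists>m\<in>{1..N}. L + y \<le> walk_after_low_exit L y m \<omega> then 1 else 0 :: real)
      \<le> (if stays_below y N \<omega> then 1 else 0 :: real)" for \<omega>
    using stays_below_if_no_climb[OF L y, of N \<omega>] by auto
  have "expectation (\<lambda>\<omega>. if stopped_walk L y N \<omega> \<le> y then 1 else 0 :: real)
      - expectation (\<lambda>\<omega>. if \<exists>m\<in>{1..N}. L + y \<le> walk_after_low_exit L y m \<omega> then 1 else 0 :: real)
    = expectation (\<lambda>\<omega>. (if stopped_walk L y N \<omega> \<le> y then 1 else 0 :: real)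
      - (if \<exists>m\<in>{1..N}. L + y \<le> walk_after_low_exit L y m \<omega> then 1 else 0 :: real))"
    by (rule Bochner_Integration.integral_diff[symmetric]) (use int in auto)
  also have "\<dots> \<le> expectation (\<lambda>\<omega>. if stays_below y N \<omega> then 1 else 0 :: real)"
    by (rule integral_mono) (use int pointwise in auto)
  finally show ?thesis .
qed

text \<open>Lower bound: \<open>P(walk stays below y up to N) \<ge> c / \<surd>N\<close> for \<open>y > 0\<close>, with strip width
  \<open>L = \<sigma> \<surd>(2N)\<close>.\<close>
lemma stays_below_lower:
  assumes y: "y > 0"
  obtains c where "c > 0" "\<And>N. N \<ge> 1 \<Longrightarrow> c / sqrt (real N) \<le> prob {\<omega>\<in>space M. stays_below y N \<omega>}"
proof -
  define K where "K = sqrt (2 * sigma2)"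
  have K: "K > 0" and sK: "K\<^sup>2 = 2 * sigma2" using sigma2_pos by (simp_all add: K_def)
  define c where "c = y / (2 * (y + K + Mb))"
  have "c / sqrt (real N) \<le> prob {\<omega>\<in>space M. stays_below y N \<omega>}" if N: "N \<ge> 1" for N :: nat
  proof -
    define r where "r = sqrt (real N)"
    have r: "r \<ge> 1" using N by (simp add: r_def)
    have rN: "real N = r\<^sup>2" by (simp add: r_def)
    have L: "K * r > 0" using K r by simp
    show ?thesis unfolding c_def r_def[symmetric] prob_stays_below
      by (rule lower_bound_arith[OF sigma2_pos r K sK rN y Mb_nonneg _
            stopped_walk_ends_low[OF L less_imp_le[OF y]]
            climb_after_low_exit_bound[OF L less_imp_le[OF y]]
            stays_below_lower_relation[OF L less_imp_le[OF y]]])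
         (auto intro!: integral_nonneg_AE)
  qed
  moreover have "c > 0" using y K Mb_nonneg by (simp add: c_def)
  ultimately show ?thesis using that by blast
qed

end

section \<open>From the random walk to the AR process\<close>

lemma AR_measurable:
  assumes meas: "\<And>n. Y n \<in> borel_measurable M" and AR: "is_AR_process p a Y X"
  shows "X n \<in> borel_measurable M"
proof (induction n rule: less_induct)
  case (less n)
  show ?case
  proof (cases "n = 0")
    case True
    then have "X n = (\<lambda>_. 0)" using AR by (auto simp: is_AR_process_def fun_eq_iff)
    then show ?thesis by simp
  next
    case False
    then have "X n = (\<lambda>\<omega>. (\<Sum>k=1..p. a k * (if k < n then X (n - k) \<omega> else 0)) + Y n \<omega>)"
      using AR by (auto simp: is_AR_process_def fun_eq_iff)
    moreover have "(\<lambda>\<omega>. if k < n then X (n - k) \<omega> else 0) \<in> borel_measurable M" if "k \<in> {1..p}" for k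
    proof (cases "k < n")
      case True
      then have "n - k < n" using that by auto
      then show ?thesis using less True by simp
    qed simp
    ultimately show ?thesis using meas by simp
  qed
qed

context iid_bounded_innovations
begin

lemma AR_sums_near_walk:
  assumes AR: "is_AR_process p a Y X" and roots: "\<And>z. char_poly_AR p a z = 0 \<Longrightarrow> cmod z < 1"
  obtains E where "E \<ge> 0"
    and "AE \<omega> in M. \<forall>n. \<bar>(1 - (\<Sum>k=1..p. a k)) * (\<Sum>k=1..n. X k \<omega>) - walk n \<omega>\<bar> \<le> E"
proof -
  obtain D where D0: "D \<ge> 0" and D: "\<And>(x::nat\<Rightarrow>real) u B n.
     \<forall>n\<ge>1. x n = (\<Sum>k=1..p. a k * (if k < n then x (n-k) else 0)) + u n \<Longrightarrow>
     \<forall>n\<ge>1. \<bar>u n\<bar> \<le> B \<Longrightarrow>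
     \<bar>(1 - (\<Sum>k=1..p. a k)) * (\<Sum>k=1..n. x k) - (\<Sum>k=1..n. u k)\<bar> \<le> D * B"
    using AR_partial_sums_comparison[OF roots] by blast
  have rec: "\<forall>n\<ge>1. X n \<omega> = (\<Sum>k=1..p. a k * (if k < n then X (n-k) \<omega> else 0)) + Y n \<omega>" for \<omega>
    using AR by (simp add: is_AR_process_def)
  show ?thesis
  proof (rule that)
    show "D * Mb \<ge> 0" using D0 Mb_nonneg by simp
    show "AE \<omega> in M. \<forall>n. \<bar>(1 - (\<Sum>k=1..p. a k)) * (\<Sum>k=1..n. X k \<omega>) - walk n \<omega>\<bar> \<le> D * Mb"
      using Y_bounded_AE by eventually_elim (use D[OF rec] in \<open>simp add: walk_def\<close>)
  qed
qed

lemma max_partial_sums_sandwich: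
  fixes S :: "nat \<Rightarrow> 'a \<Rightarrow> real" and N :: nat
  assumes c: "c > 0" and near: "AE \<omega> in M. \<forall>n. \<bar>c * S n \<omega> - walk n \<omega>\<bar> \<le> E"
    and meas: "\<And>n. S n \<in> borel_measurable M" and N: "N \<ge> 1"
  shows "prob {\<omega>\<in>space M. stays_below (c * x - E) N \<omega>} \<le> prob {\<omega>\<in>space M. (MAX n\<in>{1..N}. S n \<omega>) \<le> x}"
    and "prob {\<omega>\<in>space M. (MAX n\<in>{1..N}. S n \<omega>) \<le> x} \<le> prob {\<omega>\<in>space M. stays_below (c * x + E) N \<omega>}"
proof -
  have max_eq: "{\<omega>\<in>space M. (MAX n\<in>{1..N}. S n \<omega>) \<le> x} = {\<omega>\<in>space M. \<forall>n\<in>{1..N}. S n \<omega> \<le> x}"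
    using N by auto
  have sets: "{\<omega>\<in>space M. \<forall>n\<in>{1..N}. S n \<omega> \<le> x} \<in> sets M" using meas by measurable
  have sum_le: "S n \<omega> \<le> x" if "\<forall>n. \<bar>c * S n \<omega> - walk n \<omega>\<bar> \<le> E" "walk n \<omega> \<le> c * x - E" for n \<omega>
  proof -
    have "c * S n \<omega> \<le> c * x" using that(1)[rule_format, of n] that(2) by linarith
    then show ?thesis using c by simp
  qed
  have walk_le: "walk n \<omega> \<le> c * x + E" if "\<forall>n. \<bar>c * S n \<omega> - walk n \<omega>\<bar> \<le> E" "S n \<omega> \<le> x" for n \<omega>
  proof -
    have "c * S n \<omega> \<le> c * x" using that(2) c by simp
    then show ?thesis using that(1)[rule_format, of n] by linarith
  qed
  show "prob {\<omega>\<in>space M. stays_below (c * x - E) N \<omega>} \<le> prob {\<omega>\<in>space M. (MAX n\<in>{1..N}. S n \<omega>) \<le> x}"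
    unfolding max_eq using near
    by (intro finite_measure_mono_AE[OF _ sets]) (auto simp: stays_below_def intro: sum_le)
  show "prob {\<omega>\<in>space M. (MAX n\<in>{1..N}. S n \<omega>) \<le> x} \<le> prob {\<omega>\<in>space M. stays_below (c * x + E) N \<omega>}"
    unfolding max_eq using near
    by (intro finite_measure_mono_AE[OF _ stays_below_sets]) (auto simp: stays_below_def intro: walk_le)
qed

end

theorem mainTheorem19:
  fixes M :: "'a measure" and Y X :: "nat \<Rightarrow> 'a \<Rightarrow> real"
    and p :: nat and a :: "nat \<Rightarrow> real" and Mb :: real
  assumes "prob_space M"
    and meas: "\<And>n. Y n \<in> borel_measurable M"
    and indep: "prob_space.indep_vars M (\<lambda>_. borel) Y {1..}"
    and ident: "\<And>n. n \<ge> 1 \<Longrightarrow> distr M borel (Y n) = distr M borel (Y 1)"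
    and nondeg: "\<not> (\<exists>c. AE \<omega> in M. Y 1 \<omega> = c)"
    and mean0: "prob_space.expectation M (Y 1) = 0"
    and bdd: "AE \<omega> in M. \<bar>Y 1 \<omega>\<bar> \<le> Mb"
    and AR: "is_AR_process p a Y X"
    and roots: "\<And>z. char_poly_AR p a z = 0 \<Longrightarrow> cmod z < 1"
  shows "\<exists>x0\<ge>0. \<forall>x\<ge>x0.
           (\<lambda>N. measure M {\<omega> \<in> space M. (MAX n\<in>{1..N}. \<Sum>k=1..n. X k \<omega>) \<le> x})
             \<in> \<Theta>(\<lambda>N. 1 / sqrt (real N))"
proof -
  interpret iid_bounded_innovations M Y Mb
    by (rule iid_bounded_innovations.intro[OF assms(1)
          iid_bounded_innovations_axioms.intro[OF meas indep ident nondeg mean0 bdd]])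
  define c where "c = 1 - (\<Sum>k=1..p. a k)"
  have c: "c > 0" unfolding c_def by (rule char_poly_one_pos[OF roots])
  obtain E where E: "E \<ge> 0" and near: "AE \<omega> in M. \<forall>n. \<bar>c * (\<Sum>k=1..n. X k \<omega>) - walk n \<omega>\<bar> \<le> E"
    unfolding c_def by (rule AR_sums_near_walk[OF AR roots])
  have meas_S: "(\<lambda>\<omega>. \<Sum>k=1..n. X k \<omega>) \<in> borel_measurable M" for n
    using AR_measurable[OF meas AR] by measurable
  note sandwich = max_partial_sums_sandwich[OF c near meas_S]
  show ?thesis
  proof (intro exI[of _ "(E + 1) / c"] conjI allI impI)
    show "(E + 1) / c \<ge> 0" using E c by simp
    fix x assume "x \<ge> (E + 1) / c"
    then have pos: "c * x - E > 0" using c by (simp add: field_simps)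
    obtain c1 where "c1 > 0"
      and lower: "\<And>N::nat. N \<ge> 1 \<Longrightarrow> c1 / sqrt (real N) \<le> prob {\<omega>\<in>space M. stays_below (c * x - E) N \<omega>}"
      using stays_below_lower[OF pos] by blast
    obtain C where upper: "\<And>N::nat. N \<ge> 1 \<Longrightarrow>
        prob {\<omega>\<in>space M. stays_below (c * x + E) N \<omega>} \<le> C / sqrt (real N)"
      using stays_below_upper[of "c * x + E"] pos E by force
    show "(\<lambda>N. prob {\<omega> \<in> space M. (MAX n\<in>{1..N}. \<Sum>k=1..n. X k \<omega>) \<le> x}) \<in> \<Theta>(\<lambda>N. 1 / sqrt (real N))"
      by (rule bigtheta_inv_sqrt[OF \<open>c1 > 0\<close>])
         (use lower upper sandwich in \<open>fastforce intro: order_trans\<close>)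
  qed
qed

end
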